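(* Consider the hybrid system $\mathcal H$ described in the context and suppose Assumption 2 holds with $\alpha(s)=as$ for all $s\ge0$, for some $a>0$. Let $a_U\in(0,a]$ and $\mu>0$, and for each $i\in\{1,\dots,N\}$ choose: (i) $c_i\in[0,c_i^\star]$ and $\sigma_i\in[0,\sigma_i^\star]$, where $c_i^\star\ge0$, $\sigma_i^\star>0$ satisfy $\sigma_i^\star c_i^\star<1$; (ii) $\alpha_i(s)=a_is$ for $s\ge0$, with $a_i\ge a_i^\star$, where $a_i^\star>0$ satisfies $a_i^\star>\frac{a_U}{1-\sigma_i^\star c_i^\star}$; (iii) $b_i\in[0,1]$; (iv) $\varepsilon_i\in(0,\varepsilon_i^\star]$ where $\varepsilon_1^\star+\dots+\varepsilon_N^\star\le\frac{a_U\mu}{1+\varsigma}$, $\varsigma:=\max\{d_1c_1^\star,\dots,d_Nc_N^\star\}$, and $d_i:=\sigma_i^\star\big(1-\sigma_i^\star c_i^\star-\frac{a_U}{a_i^\star}\big)^{-1}>0$. Then each $d_i$ satisfies $d_i>\frac{\sigma_i^\star}{1-\sigma_i^\star c_i^\star}$, and for any input $w=(u,v)\in\mathcal L_{\mathcal W}$, any solution $q=(x,z,e,\eta)$ of $\mathcal H$ satisfies, for all $(t,j)\in\operatorname{dom}q$, $$V(x(t,j),z(t,j))+\sum_{i=1}^Nd_i\eta_i(t,j)\le e^{-a_Ut}\Big(V(x(0,0),z(0,0))+\sum_{i=1}^Nd_i\eta_i(0,0)\Big)+\mu+\frac{1}{a_U}\theta(\|v\|_{[0,t]}),$$ where $\theta$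 is from Assumption 2.
   Context: Notation: $\mathcal K_\infty$ is the class of continuous, strictly increasing, unbounded functions $\mathbb R_{\ge0}\to\mathbb R_{\ge0}$ vanishing at $0$; $|\cdot|$ is the Euclidean norm. For $S\subseteq\mathbb R^m$, $\mathcal L_S$ is the set of Lebesgue measurable, locally essentially bounded functions $\mathbb R_{\ge0}\to S$; $\|v\|_{[t_1,t_2]}:=\operatorname{ess\,sup}_{t\in[t_1,t_2]}|v(t)|$. Plant: $\dot x=f_p(x,u,v)$, $y=h(x)$, $x\in\mathbb R^{n_x}$, $u\in\mathcal L_{\mathcal U}$, $v\in\mathcal L_{\mathcal V}$, $\mathcal U\subseteq\mathbb R^{n_u}$, $\mathcal V\subseteq\mathbb R^{n_v}$; $f_p$ locally Lipschitz in $x$, continuous in the others; $h$ continuously differentiable. Output split into $N\in\{1,\dots,n_y\}$ nodes $y=(h_1(x),\dots,h_N(x))$, $y_i\in\mathbb R^{n_{y_i}}$. Observer data: continuous $f_o:\mathbb R^{n_z}\times\mathbb R^{n_u}\times\mathbb R^{n_y}\times\mathbb R^{n_y}\to\mathbb R^{n_z}$ ($n_z\ge n_x$), $\psi:\mathbb R^{n_z}\to\mathbb R^{n_x}$ with right inverse $\psi^{-R}$; the observer has access to $u$ at all times (Assumption 1). Assumption 2: there exist $\underline\alpha,\overline\alpha,\alpha,\gamma_1,\dots,\gamma_N,\theta\in\mathcal K_\infty$ and continuously differentiable $V:\mathbb R^{n_x}\times\mathbb R^{n_z}\to\mathbb R_{\ge0}$ such that for all $x,z$, $u\in\mathcal U$,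 $v\in\mathcal V$, $e=(e_1,\dots,e_N)\in\mathbb R^{n_y}$ ($e_i\in\mathbb R^{n_{y_i}}$), $\hat y\in\mathbb R^{n_y}$: $\underline\alpha(|x-\psi(z)|)\le V(x,z)\le\overline\alpha(|\psi^{-R}(x)-z|)$ and $\langle\nabla V(x,z),(f_p(x,u,v),f_o(z,u,h(x)+e,\hat y))\rangle\le-\alpha(V(x,z))+\sum_i\gamma_i(|e_i|)+\theta(|v|)$. Hybrid system $\mathcal H$ with design functions/parameters $\alpha_i\in\mathcal K_\infty$, $c_i\ge0$, $b_i\in[0,1]$, $\sigma_i\ge0$, $\varepsilon_i>0$: state $q=(x,z,e,\eta)\in\mathcal Q:=\mathbb R^{n_x}\times\mathbb R^{n_z}\times\mathbb R^{n_y}\times\mathbb R^N_{\ge0}$, input $w=(u,v)\in\mathcal W:=\mathcal U\times\mathcal V$. Flow map $F(q,w):=(f_p(x,u,v),f_o(z,u,h(x)+e,h(\psi(z))),g_1,\dots,g_N,\ell_1,\dots,\ell_N)$, $g_i=-\frac{\partial h_i(x)}{\partial x}f_p(x,u,v)$, $\ell_i=-\alpha_i(\eta_i)+c_i\gamma_i(|e_i|)$. $\mathcal C:=\bigcap_i\{q:\gamma_i(|e_i|)\le\sigma_i\alpha_i(\eta_i)+\varepsilon_i\}$, $\mathcal D:=\bigcup_i\mathcal D_i$, $\mathcal D_i:=\{q:\gamma_i(|e_i|)\ge\sigma_i\alpha_i(\eta_i)+\varepsilon_i\}$. $G(q):=\bigcup_iG_i(q)$, $G_i(q)=\emptyset$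 if $q\notin\mathcal D_i$, else $G_i(q)=\{(x,z,e',\eta')\}$ with $e'_i=0,\eta'_i=b_i\eta_i$, and $e'_j=e_j,\eta'_j=\eta_j$ for $j\ne i$. Dynamics: $\dot q=F(q,w)$, $q\in\mathcal C$; $q^+\in G(q)$, $q\in\mathcal D$. Solutions: a hybrid time domain is a set $E\subset\mathbb R_{\ge0}\times\mathbb Z_{\ge0}$ such that each truncation $E\cap([0,T]\times\{0,\dots,J\})$, $(T,J)\in E$, is a finite union $\bigcup_j([t_j,t_{j+1}],j)$ with $0=t_0\le t_1\le\dots$. A hybrid arc $q$ (with $q(\cdot,j)$ locally absolutely continuous) is a solution for input $w\in\mathcal L_{\mathcal W}$ if for each $j$ with $I^j:=\{t:(t,j)\in\operatorname{dom}q\}$ of nonempty interior, $\dot q(t,j)=F(q(t,j),w(t))$ and $q(t,j)\in\mathcal C$ for a.a. $t\in I^j$, and whenever $(t,j),(t,j+1)\in\operatorname{dom}q$, $q(t,j)\in\mathcal D$ and $q(t,j+1)\in G(q(t,j))$. *)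

theory Defs
  imports "HOL-Analysis.Analysis"
begin

text \<open>Class K-infinity: functions on the nonnegative reals (represented as real => real,
  only values on [0,oo) matter) that are continuous, strictly increasing, unbounded,
  and vanish at 0.\<close>
definition Kinf :: "(real \<Rightarrow> real) \<Rightarrow> bool" where
  "Kinf \<alpha> \<longleftrightarrow> continuous_on {0..} \<alpha> \<and> strict_mono_on {0..} \<alpha> \<and> \<alpha> 0 = 0
      \<and> (\<forall>M. \<exists>s\<ge>0. \<alpha> s > M)"

text \<open>Lebesgue measurable, locally essentially bounded functions [0,oo) -> S
  (represented as functions on real; only values on [0,oo) matter).\<close>
definition L_signal :: "'a::euclidean_space set \<Rightarrow> (real \<Rightarrow> 'a) \<Rightarrow> bool" where
  "L_signal S w \<longleftrightarrow> w \<in> borel_measurable (lebesgue_on {0..})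
     \<and> (\<forall>t\<ge>0. w t \<in> S)
     \<and> (\<forall>T\<ge>0. \<exists>M. AE t in lebesgue. t \<in> {0..T} \<longrightarrow> norm (w t) \<le> M)"

text \<open>Essential supremum of the norm of v over [t1,t2] (as a nonnegative number;
  it is 0 when [t1,t2] is a null set).\<close>
definition ess_sup_norm :: "(real \<Rightarrow> 'a::real_normed_vector) \<Rightarrow> real \<Rightarrow> real \<Rightarrow> real" where
  "ess_sup_norm v t1 t2 = Inf {M. 0 \<le> M \<and> (AE s in lebesgue. s \<in> {t1..t2} \<longrightarrow> norm (v s) \<le> M)}"

definition abs_continuous_on :: "(real \<Rightarrow> 'a::real_normed_vector) \<Rightarrow> real \<Rightarrow> real \<Rightarrow> bool" where
  "abs_continuous_on f a b \<longleftrightarrow>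
     (\<forall>\<epsilon>>0. \<exists>\<delta>>0. \<forall>(n::nat) (l::nat\<Rightarrow>real) (r::nat\<Rightarrow>real).
        (\<forall>k<n. a \<le> l k \<and> l k \<le> r k \<and> r k \<le> b)
        \<and> (\<forall>k<n. \<forall>k'<n. k \<noteq> k' \<longrightarrow> r k \<le> l k' \<or> r k' \<le> l k)
        \<and> (\<Sum>k<n. r k - l k) < \<delta>
        \<longrightarrow> (\<Sum>k<n. norm (f (r k) - f (l k))) < \<epsilon>)"

definition loc_abs_continuous_on :: "(real \<Rightarrow> 'a::real_normed_vector) \<Rightarrow> real set \<Rightarrow> bool" where
  "loc_abs_continuous_on f I \<longleftrightarrow> (\<forall>a b. {a..b} \<subseteq> I \<longrightarrow> abs_continuous_on f a b)"

definition hybrid_time_domain :: "(real \<times> nat) set \<Rightarrow> bool" where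
  "hybrid_time_domain E \<longleftrightarrow> E \<subseteq> {0..} \<times> UNIV \<and>
     (\<forall>(T,J)\<in>E. \<exists>tt::nat \<Rightarrow> real. tt 0 = 0 \<and> (\<forall>k\<le>J. tt k \<le> tt (Suc k)) \<and>
        E \<inter> ({0..T} \<times> {0..J}) = (\<Union>j\<in>{0..J}. {tt j..tt (Suc j)} \<times> {j}))"

definition flow_interval :: "(real \<times> nat) set \<Rightarrow> nat \<Rightarrow> real set" where
  "flow_interval E j = {t. (t, j) \<in> E}"

definition hybrid_arc :: "'q::real_normed_vector set \<Rightarrow> (real \<times> nat) set \<Rightarrow> (real \<times> nat \<Rightarrow> 'q) \<Rightarrow> bool" where
  "hybrid_arc Q E q \<longleftrightarrow> hybrid_time_domain E \<and> (\<forall>p\<in>E. q p \<in> Q)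
     \<and> (\<forall>j. loc_abs_continuous_on (\<lambda>t. q (t, j)) (flow_interval E j))"

definition hybrid_solution ::
  "'q::real_normed_vector set \<Rightarrow> ('q \<Rightarrow> 'w \<Rightarrow> 'q) \<Rightarrow> 'q set \<Rightarrow> 'q set \<Rightarrow> ('q \<Rightarrow> 'q set)
   \<Rightarrow> (real \<Rightarrow> 'w) \<Rightarrow> (real \<times> nat) set \<Rightarrow> (real \<times> nat \<Rightarrow> 'q) \<Rightarrow> bool" where
  "hybrid_solution Q F C D G w E q \<longleftrightarrow> hybrid_arc Q E q
     \<and> (\<forall>j. interior (flow_interval E j) \<noteq> {} \<longrightarrow>
          (AE t in lebesgue. t \<in> flow_interval E j \<longrightarrow>
              ((\<lambda>s. q (s, j)) has_vector_derivative F (q (t, j)) (w t)) (at t within flow_interval E j)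
              \<and> q (t, j) \<in> C))
     \<and> (\<forall>t j. (t, j) \<in> E \<and> (t, Suc j) \<in> E \<longrightarrow> q (t, j) \<in> D \<and> q (t, Suc j) \<in> G (q (t, j)))"

text \<open>The output space 'y (= R^{n_y}) is split into N nodes: every basis vector (coordinate)
  of 'y is assigned to a node in the finite index type 'n (N = CARD('n)); e_i is the
  component of e in the coordinates belonging to node i.\<close>
definition node_part :: "('y::euclidean_space \<Rightarrow> 'n) \<Rightarrow> 'n \<Rightarrow> 'y \<Rightarrow> 'y" where
  "node_part node i e = (\<Sum>b\<in>{b\<in>Basis. node b = i}. (e \<bullet> b) *\<^sub>R b)"

type_synonym ('x, 'z, 'y, 'n) hstate = "'x \<times> 'z \<times> 'y \<times> (real^'n)"

definition H_Q :: "('x::euclidean_space, 'z::euclidean_space, 'y::euclidean_space, 'n::finite) hstate set" where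
  "H_Q = {(x, z, e, \<eta>). \<forall>i. \<eta> $ i \<ge> 0}"

definition H_F ::
  "('x \<Rightarrow> 'u \<Rightarrow> 'v \<Rightarrow> 'x) \<Rightarrow> ('z \<Rightarrow> 'u \<Rightarrow> 'y \<Rightarrow> 'y \<Rightarrow> 'z) \<Rightarrow> ('x \<Rightarrow> 'y) \<Rightarrow> ('x \<Rightarrow> 'x \<Rightarrow>\<^sub>L 'y)
   \<Rightarrow> ('z \<Rightarrow> 'x) \<Rightarrow> ('y \<Rightarrow> 'n) \<Rightarrow> ('n \<Rightarrow> real \<Rightarrow> real) \<Rightarrow> ('n \<Rightarrow> real) \<Rightarrow> ('n \<Rightarrow> real \<Rightarrow> real)
   \<Rightarrow> ('x::euclidean_space, 'z::euclidean_space, 'y::euclidean_space, 'n::finite) hstate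
   \<Rightarrow> 'u \<times> 'v \<Rightarrow> ('x, 'z, 'y, 'n) hstate" where
  "H_F fp fo h Dh \<psi> node \<alpha>s c \<gamma> = (\<lambda>(x, z, e, \<eta>) (u, v).
     (fp x u v,
      fo z u (h x + e) (h (\<psi> z)),
      - blinfun_apply (Dh x) (fp x u v),
      \<chi> i. - \<alpha>s i (\<eta> $ i) + c i * \<gamma> i (norm (node_part node i e))))"

definition H_C ::
  "('y::euclidean_space \<Rightarrow> 'n) \<Rightarrow> ('n \<Rightarrow> real \<Rightarrow> real) \<Rightarrow> ('n \<Rightarrow> real) \<Rightarrow> ('n \<Rightarrow> real)
   \<Rightarrow> ('n \<Rightarrow> real \<Rightarrow> real) \<Rightarrow> ('x::euclidean_space, 'z::euclidean_space, 'y, 'n::finite) hstate set" where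
  "H_C node \<alpha>s \<sigma> \<epsilon> \<gamma> = {(x, z, e, \<eta>). (x, z, e, \<eta>) \<in> H_Q \<and>
     (\<forall>i. \<gamma> i (norm (node_part node i e)) \<le> \<sigma> i * \<alpha>s i (\<eta> $ i) + \<epsilon> i)}"

definition H_Di ::
  "('y::euclidean_space \<Rightarrow> 'n) \<Rightarrow> ('n \<Rightarrow> real \<Rightarrow> real) \<Rightarrow> ('n \<Rightarrow> real) \<Rightarrow> ('n \<Rightarrow> real)
   \<Rightarrow> ('n \<Rightarrow> real \<Rightarrow> real) \<Rightarrow> 'n \<Rightarrow> ('x::euclidean_space, 'z::euclidean_space, 'y, 'n::finite) hstate set" where
  "H_Di node \<alpha>s \<sigma> \<epsilon> \<gamma> i = {(x, z, e, \<eta>). (x, z, e, \<eta>) \<in> H_Q \<and>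
     \<gamma> i (norm (node_part node i e)) \<ge> \<sigma> i * \<alpha>s i (\<eta> $ i) + \<epsilon> i}"

definition H_D ::
  "('y::euclidean_space \<Rightarrow> 'n) \<Rightarrow> ('n \<Rightarrow> real \<Rightarrow> real) \<Rightarrow> ('n \<Rightarrow> real) \<Rightarrow> ('n \<Rightarrow> real)
   \<Rightarrow> ('n \<Rightarrow> real \<Rightarrow> real) \<Rightarrow> ('x::euclidean_space, 'z::euclidean_space, 'y, 'n::finite) hstate set" where
  "H_D node \<alpha>s \<sigma> \<epsilon> \<gamma> = (\<Union>i. H_Di node \<alpha>s \<sigma> \<epsilon> \<gamma> i)"

definition H_G ::
  "('y::euclidean_space \<Rightarrow> 'n) \<Rightarrow> ('n \<Rightarrow> real \<Rightarrow> real) \<Rightarrow> ('n \<Rightarrow> real) \<Rightarrow> ('n \<Rightarrow> real)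
   \<Rightarrow> ('n \<Rightarrow> real \<Rightarrow> real) \<Rightarrow> ('n \<Rightarrow> real)
   \<Rightarrow> ('x::euclidean_space, 'z::euclidean_space, 'y, 'n::finite) hstate
   \<Rightarrow> ('x, 'z, 'y, 'n) hstate set" where
  "H_G node \<alpha>s \<sigma> \<epsilon> \<gamma> b q = (\<Union>i. if q \<in> H_Di node \<alpha>s \<sigma> \<epsilon> \<gamma> i then
     (case q of (x, z, e, \<eta>) \<Rightarrow> {(x, z, e - node_part node i e, \<chi> k. if k = i then b i * \<eta> $ i else \<eta> $ k)})
     else {})"

end

theory Submission
  imports Defs
begin

(* Let U(x, z, e, eta) = V(x, z) + sum_i d_i eta_i. Along flows, Assumption 2 with alpha(s) = a s
   and the flow-set constraint gamma_i(|e_i|) <= sigma_i a_i eta_i + eps_i give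
     U' <= - a_U U + a_U mu + theta(|v|):
   the gains d_i are chosen so that the eta_i-dynamics absorb the terms gamma_i(|e_i|) with rate a_U
   to spare, and the thresholds eps_i add at most a_U mu. At a jump U does not increase, since one
   eta_i is multiplied by b_i <= 1. Hence exp(a_U s) (U - mu - theta(||v||_[0,t]) / a_U) is
   nonincreasing in hybrid time up to time t. Solutions are only absolutely continuous along flows,
   so this comparison step rests on the fact that an absolutely continuous function with a.e.
   nonpositive derivative is nonincreasing, proved here by a gauge (Henstock-Kurzweil) argument. *)

section \<open>Absolutely continuous functions\<close>

definition nonoverlapping_intervals :: "real \<Rightarrow> real \<Rightarrow> nat \<Rightarrow> (nat \<Rightarrow> real) \<Rightarrow> (nat \<Rightarrow> real) \<Rightarrow> bool" where
  "nonoverlapping_intervals a b n l r \<longleftrightarrow> (\<forall>k<n. a \<le> l k \<and> l k \<le> r k \<and> r k \<le> b)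
     \<and> (\<forall>k<n. \<forall>k'<n. k \<noteq> k' \<longrightarrow> r k \<le> l k' \<or> r k' \<le> l k)"

lemma abs_continuous_on_iff:
  "abs_continuous_on f a b \<longleftrightarrow> (\<forall>\<epsilon>>0. \<exists>\<delta>>0. \<forall>n l r. nonoverlapping_intervals a b n l r
     \<and> (\<Sum>k<n. r k - l k) < \<delta> \<longrightarrow> (\<Sum>k<n. norm (f (r k) - f (l k))) < \<epsilon>)"
  unfolding abs_continuous_on_def nonoverlapping_intervals_def conj_assoc ..

lemma abs_continuous_onE:
  assumes "abs_continuous_on f a b" "\<epsilon> > 0"
  obtains \<delta> where "\<delta> > 0" "\<And>n l r. nonoverlapping_intervals a b n l r \<Longrightarrow> (\<Sum>k<n. r k - l k) < \<delta> \<Longrightarrow>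
      (\<Sum>k<n. norm (f (r k) - f (l k))) < \<epsilon>"
  using assms unfolding abs_continuous_on_iff by meson

lemma nonoverlapping_intervalsD:
  "nonoverlapping_intervals a b n l r \<Longrightarrow> k < n \<Longrightarrow> l k \<in> {a..b} \<and> r k \<in> {a..b} \<and> l k \<le> r k"
  unfolding nonoverlapping_intervals_def by auto

lemma abs_continuous_on_imp_continuous_on:
  assumes "abs_continuous_on f a b"
  shows "continuous_on {a..b} f"
  unfolding continuous_on_iff
proof (intro ballI allI impI)
  fix t and \<epsilon> :: real assume t: "t \<in> {a..b}" and "0 < \<epsilon>"
  with assms obtain \<delta> where "\<delta> > 0" and \<delta>: "\<And>n l r. nonoverlapping_intervals a b n l r \<Longrightarrow>
      (\<Sum>k<n. r k - l k) < \<delta> \<Longrightarrow> (\<Sum>k<n. norm (f (r k) - f (l k))) < \<epsilon>"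
    by (metis abs_continuous_onE)
  show "\<exists>\<delta>>0. \<forall>s\<in>{a..b}. dist s t < \<delta> \<longrightarrow> dist (f s) (f t) < \<epsilon>"
  proof (intro exI[of _ \<delta>] conjI ballI impI)
    fix s assume "s \<in> {a..b}" "dist s t < \<delta>"
    then have "norm (f (max s t) - f (min s t)) < \<epsilon>"
      using \<delta>[of 1 "\<lambda>_. min s t" "\<lambda>_. max s t"] t
      by (auto simp: dist_real_def nonoverlapping_intervals_def)
    then show "dist (f s) (f t) < \<epsilon>"
      by (cases "s \<le> t") (auto simp: dist_norm norm_minus_commute max_def min_def)
  qed fact
qed

lemma abs_continuous_on_id: "abs_continuous_on (\<lambda>t. t) a b"
  unfolding abs_continuous_on_iff
proof (intro allI impI exI conjI)
  fix \<epsilon> :: real and n l r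
  assume "\<epsilon> > 0" "nonoverlapping_intervals a b n l r \<and> (\<Sum>k<n. r k - l k) < \<epsilon>"
  moreover from this have "(\<Sum>k<n. norm (r k - l k)) = (\<Sum>k<n. r k - l k)"
    by (intro sum.cong) (auto dest: nonoverlapping_intervalsD)
  ultimately show "(\<Sum>k<n. norm (r k - l k)) < \<epsilon>" by simp
qed

lemma abs_continuous_on_lipschitz_compose:
  assumes q: "abs_continuous_on q a b" and f: "L-lipschitz_on S f" and qS: "q ` {a..b} \<subseteq> S"
  shows "abs_continuous_on (\<lambda>t. f (q t)) a b"
  unfolding abs_continuous_on_iff
proof (intro allI impI)
  fix \<epsilon> :: real assume "\<epsilon> > 0"
  have L: "L \<ge> 0" using f by (rule lipschitz_on_nonneg)
  with \<open>\<epsilon> > 0\<close> have "\<epsilon> / (L + 1) > 0" by simp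
  with q obtain \<delta> where "\<delta> > 0" and \<delta>: "\<And>n l r. nonoverlapping_intervals a b n l r \<Longrightarrow>
      (\<Sum>k<n. r k - l k) < \<delta> \<Longrightarrow> (\<Sum>k<n. norm (q (r k) - q (l k))) < \<epsilon> / (L + 1)"
    by (metis abs_continuous_onE)
  show "\<exists>\<delta>>0. \<forall>n l r. nonoverlapping_intervals a b n l r \<and> (\<Sum>k<n. r k - l k) < \<delta> \<longrightarrow>
      (\<Sum>k<n. norm (f (q (r k)) - f (q (l k)))) < \<epsilon>"
  proof (intro exI[of _ \<delta>] conjI allI impI; (elim conjE)?)
    fix n l r assume lr: "nonoverlapping_intervals a b n l r" "(\<Sum>k<n. r k - l k) < \<delta>"
    have "(\<Sum>k<n. norm (f (q (r k)) - f (q (l k)))) \<le> (\<Sum>k<n. L * norm (q (r k) - q (l k)))"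
    proof (rule sum_mono)
      fix k assume "k \<in> {..<n}"
      with lr(1) qS have "q (r k) \<in> S" "q (l k) \<in> S" by (auto dest!: nonoverlapping_intervalsD)
      from lipschitz_onD[OF f this]
      show "norm (f (q (r k)) - f (q (l k))) \<le> L * norm (q (r k) - q (l k))"
        by (simp add: dist_norm)
    qed
    also have "\<dots> = L * (\<Sum>k<n. norm (q (r k) - q (l k)))" by (simp add: sum_distrib_left)
    also have "\<dots> \<le> L * (\<epsilon> / (L + 1))" using \<delta>[OF lr] L by (intro mult_left_mono) auto
    also have "\<dots> < \<epsilon>" using L \<open>\<epsilon> > 0\<close> by (simp add: field_simps)
    finally show "(\<Sum>k<n. norm (f (q (r k)) - f (q (l k)))) < \<epsilon>" .
  qed fact
qed

lemma abs_continuous_on_lipschitz: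
  assumes "L-lipschitz_on {a..b} f"
  shows "abs_continuous_on f a b"
  using abs_continuous_on_lipschitz_compose[OF abs_continuous_on_id assms] by simp

lemma abs_continuous_on_C1:
  fixes f :: "real \<Rightarrow> real"
  assumes f': "\<And>t. t \<in> {a..b} \<Longrightarrow> (f has_real_derivative f' t) (at t within {a..b})"
    and cont: "continuous_on {a..b} f'"
  shows "abs_continuous_on f a b"
proof -
  obtain B where B: "\<And>t. t \<in> {a..b} \<Longrightarrow> norm (f' t) \<le> B"
    using compact_imp_bounded[OF compact_continuous_image[OF cont compact_Icc]]
    unfolding bounded_iff by blast
  have "\<bar>B\<bar>-lipschitz_on {a..b} f"
  proof (rule bounded_derivative_imp_lipschitz)
    show "(f has_derivative (\<lambda>h. f' t * h)) (at t within {a..b})" if "t \<in> {a..b}" for t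
      using f'[OF that] by (simp add: has_field_derivative_def)
    show "onorm (\<lambda>h. f' t * h) \<le> \<bar>B\<bar>" if "t \<in> {a..b}" for t
      using B[OF that] by (intro onorm_le) (auto simp: abs_mult intro: mult_right_mono)
  qed auto
  then show ?thesis by (rule abs_continuous_on_lipschitz)
qed

lemma abs_continuous_on_exp: "abs_continuous_on (\<lambda>t. exp (c * t)) a b"
  by (rule abs_continuous_on_C1[where f' = "\<lambda>t. c * exp (c * t)"])
     (auto intro!: derivative_eq_intros continuous_intros)

lemma abs_continuous_on_mult:
  fixes f g :: "real \<Rightarrow> real"
  assumes f: "abs_continuous_on f a b" and g: "abs_continuous_on g a b"
  shows "abs_continuous_on (\<lambda>t. f t * g t) a b"
  unfolding abs_continuous_on_iff
proof (intro allI impI)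
  fix \<epsilon> :: real assume "\<epsilon> > 0"
  have "bounded ((\<lambda>t. (f t, g t)) ` {a..b})"
    using f g by (intro compact_imp_bounded compact_continuous_image compact_Icc continuous_on_Pair
        abs_continuous_on_imp_continuous_on)
  then obtain M where "M > 0" and M: "\<And>t. t \<in> {a..b} \<Longrightarrow> norm (f t, g t) \<le> M"
    unfolding bounded_pos by auto
  with \<open>\<epsilon> > 0\<close> have "\<epsilon> / (2 * M) > 0" by simp
  obtain \<delta>f where "\<delta>f > 0" and \<delta>f: "\<And>n l r. nonoverlapping_intervals a b n l r \<Longrightarrow>
      (\<Sum>k<n. r k - l k) < \<delta>f \<Longrightarrow> (\<Sum>k<n. norm (f (r k) - f (l k))) < \<epsilon> / (2 * M)"
    using abs_continuous_onE[OF f \<open>\<epsilon> / (2 * M) > 0\<close>] by metis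
  obtain \<delta>g where "\<delta>g > 0" and \<delta>g: "\<And>n l r. nonoverlapping_intervals a b n l r \<Longrightarrow>
      (\<Sum>k<n. r k - l k) < \<delta>g \<Longrightarrow> (\<Sum>k<n. norm (g (r k) - g (l k))) < \<epsilon> / (2 * M)"
    using abs_continuous_onE[OF g \<open>\<epsilon> / (2 * M) > 0\<close>] by metis
  show "\<exists>\<delta>>0. \<forall>n l r. nonoverlapping_intervals a b n l r \<and> (\<Sum>k<n. r k - l k) < \<delta> \<longrightarrow>
      (\<Sum>k<n. norm (f (r k) * g (r k) - f (l k) * g (l k))) < \<epsilon>"
  proof (intro exI[of _ "min \<delta>f \<delta>g"] conjI allI impI; (elim conjE)?)
    fix n l r assume lr: "nonoverlapping_intervals a b n l r" "(\<Sum>k<n. r k - l k) < min \<delta>f \<delta>g"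
    have "(\<Sum>k<n. norm (f (r k) * g (r k) - f (l k) * g (l k)))
        \<le> (\<Sum>k<n. M * norm (g (r k) - g (l k)) + M * norm (f (r k) - f (l k)))"
    proof (rule sum_mono)
      fix k assume "k \<in> {..<n}"
      then have "norm (f (r k), g (r k)) \<le> M" "norm (f (l k), g (l k)) \<le> M"
        using M nonoverlapping_intervalsD[OF lr(1)] by auto
      then have Mr: "\<bar>f (r k)\<bar> \<le> M" and Ml: "\<bar>g (l k)\<bar> \<le> M"
        by (metis norm_fst_le norm_snd_le order_trans real_norm_def)+
      have "f (r k) * g (r k) - f (l k) * g (l k)
          = f (r k) * (g (r k) - g (l k)) + g (l k) * (f (r k) - f (l k))"
        by (simp add: algebra_simps)
      also have "\<bar>\<dots>\<bar> \<le> \<bar>f (r k)\<bar> * \<bar>g (r k) - g (l k)\<bar> + \<bar>g (l k)\<bar> * \<bar>f (r k) - f (l k)\<bar>"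
        by (metis abs_mult abs_triangle_ineq)
      also have "\<dots> \<le> M * \<bar>g (r k) - g (l k)\<bar> + M * \<bar>f (r k) - f (l k)\<bar>"
        using Mr Ml by (intro add_mono mult_right_mono) auto
      finally show "norm (f (r k) * g (r k) - f (l k) * g (l k))
          \<le> M * norm (g (r k) - g (l k)) + M * norm (f (r k) - f (l k))" by simp
    qed
    also have "\<dots> = M * (\<Sum>k<n. norm (g (r k) - g (l k))) + M * (\<Sum>k<n. norm (f (r k) - f (l k)))"
      by (simp add: sum.distrib sum_distrib_left)
    also have "\<dots> < M * (\<epsilon> / (2 * M)) + M * (\<epsilon> / (2 * M))"
      using \<delta>f[OF lr(1)] \<delta>g[OF lr(1)] lr(2) \<open>M > 0\<close> by (intro add_strict_mono mult_strict_left_mono) auto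
    also have "\<dots> = \<epsilon>" using \<open>M > 0\<close> by (simp add: field_simps)
    finally show "(\<Sum>k<n. norm (f (r k) * g (r k) - f (l k) * g (l k))) < \<epsilon>" .
  qed (use \<open>\<delta>f > 0\<close> \<open>\<delta>g > 0\<close> in auto)
qed

lemma disjoint_interiors_Icc:
  fixes l1 r1 l2 r2 :: real
  assumes "l1 < r1" "l2 < r2" "interior {l1..r1} \<inter> interior {l2..r2} = {}"
  shows "r1 \<le> l2 \<or> r2 \<le> l1"
proof (rule ccontr)
  assume "\<not> ?thesis"
  then have "(max l1 l2 + min r1 r2) / 2 \<in> {l1<..<r1} \<inter> {l2<..<r2}" using assms(1,2) by auto
  then show False using assms(3) by auto
qed

lemma tagged_partial_division_of_IccD:
  assumes "p tagged_partial_division_of {a..b::real}" "(x, K) \<in> p"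
  shows "K = {Inf K..Sup K}" "a \<le> Inf K" "Inf K \<le> x" "x \<le> Sup K" "Sup K \<le> b"
proof -
  obtain l r where K: "K = {l..r}" using tagged_partial_division_ofD(4)[OF assms] by auto
  moreover have "x \<in> K" "K \<subseteq> {a..b}" using tagged_partial_division_ofD(2,3)[OF assms] by auto
  ultimately show "K = {Inf K..Sup K}" "a \<le> Inf K" "Inf K \<le> x" "x \<le> Sup K" "Sup K \<le> b" by auto
qed

lemma tagged_partial_division_of_enumerate:
  assumes p: "p tagged_partial_division_of {a..b::real}"
  obtains n l r where "nonoverlapping_intervals a b n l r"
    "\<And>k. k < n \<Longrightarrow> \<exists>x. (x, {l k..r k}) \<in> p"
    "\<And>F :: real \<Rightarrow> real \<Rightarrow> real. (\<And>x. F x x = 0) \<Longrightarrow>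
      (\<Sum>(x, K)\<in>p. F (Inf K) (Sup K)) = (\<Sum>k<n. F (l k) (r k))"
proof -
  \<comment> \<open>Degenerate intervals may lie inside other ones, so they are dropped.\<close>
  define p' where "p' = {(x, K) \<in> p. Inf K < Sup K}"
  have "finite p'"
    using tagged_partial_division_ofD(1)[OF p] by (rule finite_subset[rotated]) (auto simp: p'_def)
  then obtain h where h: "bij_betw h {..<card p'} p'"
    using ex_bij_betw_nat_finite lessThan_atLeast0 by metis
  define l where "l k = Inf (snd (h k))" for k
  define r where "r k = Sup (snd (h k))" for k
  have hp: "h k \<in> p" "l k < r k" if "k < card p'" for k
  proof -
    from bij_betwE[OF h] that have "h k \<in> p'" by blast
    then show "h k \<in> p" "l k < r k" by (simp_all add: p'_def l_def r_def case_prod_beta)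
  qed
  note Icc = tagged_partial_division_of_IccD[OF p]
  show thesis
  proof
    show "nonoverlapping_intervals a b (card p') l r"
      unfolding nonoverlapping_intervals_def
    proof (intro conjI; intro allI impI)
      fix k assume "k < card p'"
      then show "a \<le> l k \<and> l k \<le> r k \<and> r k \<le> b"
        using hp Icc(2,5)[of "fst (h k)" "snd (h k)"] by (auto simp: l_def r_def less_imp_le)
    next
      fix k k' assume k: "k < card p'" "k' < card p'" "k \<noteq> k'"
      then have "h k \<noteq> h k'" using bij_betw_imp_inj_on[OF h] by (auto dest: inj_onD)
      then have "interior {l k..r k} \<inter> interior {l k'..r k'} = {}"
        using tagged_partial_division_ofD(5)[OF p, of "fst (h k)" "snd (h k)" "fst (h k')" "snd (h k')"]
          Icc[of "fst (h k)" "snd (h k)"] Icc[of "fst (h k')" "snd (h k')"] hp[OF k(1)] hp[OF k(2)]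
        by (simp add: l_def r_def)
      then show "r k \<le> l k' \<or> r k' \<le> l k"
        using disjoint_interiors_Icc hp(2)[OF k(1)] hp(2)[OF k(2)] by blast
    qed
    show "\<exists>x. (x, {l k..r k}) \<in> p" if "k < card p'" for k
      using hp[OF that] Icc[of "fst (h k)" "snd (h k)"]
      by (auto simp: l_def r_def intro!: exI[of _ "fst (h k)"])
    fix F :: "real \<Rightarrow> real \<Rightarrow> real" assume F0: "\<And>x. F x x = 0"
    have "\<forall>xK\<in>p - p'. (\<lambda>(x, K). F (Inf K) (Sup K)) xK = 0"
    proof
      fix xK assume "xK \<in> p - p'"
      then obtain x K where "xK = (x, K)" "(x, K) \<in> p" "\<not> Inf K < Sup K"
        by (cases xK) (auto simp: p'_def)
      moreover from this have "Inf K = Sup K" using Icc(3,4) by fastforce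
      ultimately show "(\<lambda>(x, K). F (Inf K) (Sup K)) xK = 0" using F0 by simp
    qed
    then have "(\<Sum>(x, K)\<in>p. F (Inf K) (Sup K)) = (\<Sum>(x, K)\<in>p'. F (Inf K) (Sup K))"
      using tagged_partial_division_ofD(1)[OF p] by (intro sum.mono_neutral_right) (auto simp: p'_def)
    also have "\<dots> = (\<Sum>k<card p'. F (l k) (r k))"
      by (simp add: sum.reindex_bij_betw[OF h, symmetric] l_def r_def split_def)
    finally show "(\<Sum>(x, K)\<in>p. F (Inf K) (Sup K)) = (\<Sum>k<card p'. F (l k) (r k))" .
  qed
qed

lemma sum_nonoverlapping_intervals:
  assumes "nonoverlapping_intervals a b n l r"
  shows "(\<Sum>k<n. r k - l k) = measure lebesgue (\<Union>k<n. {l k..r k})"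
proof -
  have "pairwise (\<lambda>k k'. negligible ({l k..r k} \<inter> {l k'..r k'})) {..<n}"
  proof (rule pairwiseI)
    fix k k' assume "k \<in> {..<n}" "k' \<in> {..<n}" "k \<noteq> k'"
    then have "{l k..r k} \<inter> {l k'..r k'} \<subseteq> {r k, r k'}"
      using assms unfolding nonoverlapping_intervals_def by fastforce
    then show "negligible ({l k..r k} \<inter> {l k'..r k'})"
      by (rule negligible_subset[OF negligible_finite, rotated]) simp
  qed
  then have "measure lebesgue (\<Union>k<n. {l k..r k}) = (\<Sum>k<n. measure lebesgue {l k..r k})"
    by (intro measure_negligible_finite_Union_image) auto
  also have "\<dots> = (\<Sum>k<n. r k - l k)"
    using assms by (intro sum.cong) (auto dest: nonoverlapping_intervalsD)
  finally show ?thesis ..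
qed

lemma abs_continuous_on_tagged_partial_division_sum:
  assumes "abs_continuous_on g a b" "\<epsilon> > 0"
  obtains \<delta> where "\<delta> > 0" "\<And>p U. p tagged_partial_division_of {a..b} \<Longrightarrow> (\<And>x K. (x, K) \<in> p \<Longrightarrow> K \<subseteq> U)
      \<Longrightarrow> U \<in> lmeasurable \<Longrightarrow> measure lebesgue U < \<delta> \<Longrightarrow> (\<Sum>(x, K)\<in>p. norm (g (Sup K) - g (Inf K))) < \<epsilon>"
proof -
  obtain \<delta> where "\<delta> > 0" and \<delta>: "\<And>n l r. nonoverlapping_intervals a b n l r \<Longrightarrow>
      (\<Sum>k<n. r k - l k) < \<delta> \<Longrightarrow> (\<Sum>k<n. norm (g (r k) - g (l k))) < \<epsilon>"
    using abs_continuous_onE[OF assms] by metis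
  show thesis
  proof (rule that[OF \<open>\<delta> > 0\<close>])
    fix p U assume p: "p tagged_partial_division_of {a..b}" and pU: "\<And>x K. (x, K) \<in> p \<Longrightarrow> K \<subseteq> U"
      and U: "U \<in> lmeasurable" "measure lebesgue U < \<delta>"
    obtain n l r where lr: "nonoverlapping_intervals a b n l r" "\<And>k. k < n \<Longrightarrow> \<exists>x. (x, {l k..r k}) \<in> p"
      and sums: "\<And>F :: real \<Rightarrow> real \<Rightarrow> real. (\<And>x. F x x = 0) \<Longrightarrow>
        (\<Sum>(x, K)\<in>p. F (Inf K) (Sup K)) = (\<Sum>k<n. F (l k) (r k))"
      by (rule tagged_partial_division_of_enumerate[OF p]) blast
    have "(\<Sum>k<n. r k - l k) = measure lebesgue (\<Union>k<n. {l k..r k})"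
      by (rule sum_nonoverlapping_intervals[OF lr(1)])
    also have "\<dots> \<le> measure lebesgue U"
      using lr(2) pU U(1) by (intro measure_mono_fmeasurable) (fastforce, auto)
    finally have "(\<Sum>k<n. norm (g (r k) - g (l k))) < \<epsilon>" using \<delta>[OF lr(1)] U(2) by simp
    with sums[of "\<lambda>x y. norm (g y - g x)"] show "(\<Sum>(x, K)\<in>p. norm (g (Sup K) - g (Inf K))) < \<epsilon>"
      by (simp add: split_def)
  qed
qed

lemma null_sets_lebesgue_open_superset:
  assumes "N \<in> null_sets lebesgue" "e > 0"
  obtains U where "open U" "N \<subseteq> U" "U \<in> lmeasurable" "measure lebesgue U < e"
proof -
  obtain U where U: "open U" "N \<subseteq> U" "U - N \<in> lmeasurable" "emeasure lebesgue (U - N) < ennreal e"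
    using sets_lebesgue_outer_open[OF null_setsD2[OF assms(1)] assms(2)] by blast
  have UN: "U = (U - N) \<union> N" using U(2) by blast
  have "U \<in> lmeasurable"
    using U(3) fmeasurableI_null_sets[OF assms(1)] by (subst UN) (rule fmeasurable.Un)
  moreover have "measure lebesgue U = measure lebesgue (U - N)"
    using measure_Un_null_set[OF fmeasurableD[OF U(3)] assms(1)] UN by simp
  moreover have "measure lebesgue (U - N) < e"
    using U(3,4) assms(2) by (simp add: emeasure_eq_measure2 ennreal_less_iff)
  ultimately show thesis using that U(1,2) by simp
qed

lemma has_real_derivative_nonpos_imp_local_decrease:
  fixes g :: "real \<Rightarrow> real"
  assumes "(g has_real_derivative D) (at t within S)" "D \<le> 0" "\<epsilon> > 0"
  obtains \<rho> where "\<rho> > 0" "\<And>u v. u \<in> S \<Longrightarrow> v \<in> S \<Longrightarrow> u \<le> t \<Longrightarrow> t \<le> v \<Longrightarrow> {u..v} \<subseteq> ball t \<rho> \<Longrightarrow>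
      g v - g u \<le> \<epsilon> * (v - u)"
proof -
  obtain \<rho> where "\<rho> > 0" and \<rho>: "\<And>y. y \<in> S \<Longrightarrow> norm (y - t) < \<rho> \<Longrightarrow>
      norm (g y - g t - D * (y - t)) \<le> \<epsilon> * norm (y - t)"
    using assms(1,3) unfolding has_field_derivative_def has_derivative_within_alt by blast
  show thesis
  proof (rule that[OF \<open>\<rho> > 0\<close>])
    fix u v assume uv: "u \<in> S" "v \<in> S" "u \<le> t" "t \<le> v" "{u..v} \<subseteq> ball t \<rho>"
    then have "u \<in> {u..v}" "v \<in> {u..v}" by auto
    with uv(5) have "u \<in> ball t \<rho>" "v \<in> ball t \<rho>" by auto
    then have "norm (v - t) < \<rho>" "norm (u - t) < \<rho>" by (auto simp: dist_norm norm_minus_commute)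
    then have "\<bar>g v - g t - D * (v - t)\<bar> \<le> \<epsilon> * (v - t)" "\<bar>g u - g t - D * (u - t)\<bar> \<le> \<epsilon> * (t - u)"
      using \<rho>[OF uv(2)] \<rho>[OF uv(1)] uv(3,4) by auto
    moreover have "D * (v - t) \<le> 0" "D * (t - u) \<le> 0"
      using assms(2) uv(3,4) by (auto intro: mult_nonpos_nonneg)
    ultimately show "g v - g u \<le> \<epsilon> * (v - u)" by (simp add: abs_le_iff algebra_simps)
  qed
qed

lemma nonpos_derivative_adapted_gauge:
  fixes g :: "real \<Rightarrow> real"
  assumes "open U" "N \<subseteq> U" "\<epsilon> > 0"
    and good: "\<forall>t\<in>{a..b} - N. \<exists>D. (g has_real_derivative D) (at t within {a..b}) \<and> D \<le> 0"
  obtains \<rho> where "\<And>t. \<rho> t > 0" "\<And>t. t \<in> N \<Longrightarrow> ball t (\<rho> t) \<subseteq> U"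
    "\<And>t u v. t \<in> {a..b} - N \<Longrightarrow> u \<in> {a..b} \<Longrightarrow> v \<in> {a..b} \<Longrightarrow> u \<le> t \<Longrightarrow> t \<le> v \<Longrightarrow>
       {u..v} \<subseteq> ball t (\<rho> t) \<Longrightarrow> g v - g u \<le> \<epsilon> * (v - u)"
proof -
  have "\<exists>\<rho>>0. (t \<in> N \<longrightarrow> ball t \<rho> \<subseteq> U) \<and> (t \<in> {a..b} - N \<longrightarrow> (\<forall>u v. u \<in> {a..b} \<longrightarrow>
      v \<in> {a..b} \<longrightarrow> u \<le> t \<longrightarrow> t \<le> v \<longrightarrow> {u..v} \<subseteq> ball t \<rho> \<longrightarrow> g v - g u \<le> \<epsilon> * (v - u)))" for t
  proof -
    consider "t \<in> N" | "t \<in> {a..b} - N" | "t \<notin> N" "t \<notin> {a..b}" by blast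
    then show ?thesis
    proof cases
      case 1
      then show ?thesis using assms(1,2) open_contains_ball by blast
    next
      case 2
      then obtain D where "(g has_real_derivative D) (at t within {a..b})" "D \<le> 0" using good by blast
      then obtain \<rho> where "\<rho> > 0" and \<rho>: "\<And>u v. u \<in> {a..b} \<Longrightarrow> v \<in> {a..b} \<Longrightarrow> u \<le> t \<Longrightarrow> t \<le> v \<Longrightarrow>
          {u..v} \<subseteq> ball t \<rho> \<Longrightarrow> g v - g u \<le> \<epsilon> * (v - u)"
        using \<open>\<epsilon> > 0\<close> by (rule has_real_derivative_nonpos_imp_local_decrease) blast
      with 2 show ?thesis by (intro exI[of _ \<rho>]) auto
    qed (auto intro: exI[of _ 1])
  qed
  then show thesis using that by metis
qed

lemma tagged_division_sum_le_length:
  fixes g :: "real \<Rightarrow> real"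
  assumes "a \<le> b" "p tagged_division_of {a..b}" "q \<subseteq> p" "\<epsilon> \<ge> 0"
    and "\<And>x K. (x, K) \<in> q \<Longrightarrow> g (Sup K) - g (Inf K) \<le> \<epsilon> * (Sup K - Inf K)"
  shows "(\<Sum>(x, K)\<in>q. g (Sup K) - g (Inf K)) \<le> \<epsilon> * (b - a)"
proof -
  have "finite p" using assms(2) by blast
  have "Inf K \<le> Sup K" if "(x, K) \<in> p" for x K
    using tagged_partial_division_of_IccD(3,4)[OF _ that] assms(2)
    by (fastforce simp: tagged_division_of_def)
  have "(\<Sum>(x, K)\<in>q. g (Sup K) - g (Inf K)) \<le> (\<Sum>(x, K)\<in>q. \<epsilon> * (Sup K - Inf K))"
    using assms(5) by (intro sum_mono) auto
  also have "\<dots> \<le> (\<Sum>(x, K)\<in>p. \<epsilon> * (Sup K - Inf K))"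
    using \<open>finite p\<close> assms(3,4) \<open>\<And>x K. (x, K) \<in> p \<Longrightarrow> Inf K \<le> Sup K\<close>
    by (intro sum_mono2) auto
  also have "\<dots> = \<epsilon> * (b - a)"
    using additive_tagged_division_1[OF assms(1,2), of "\<lambda>t. t"]
    by (simp add: sum_distrib_left[symmetric] split_def)
  finally show ?thesis .
qed

(* The tags in the null set N where no derivative bound is available get intervals inside an open
   set of small measure, so by absolute continuity they contribute little; every other tagged
   interval contributes at most eps times its length. *)
lemma abs_continuous_on_nonpos_derivative_imp_le:
  fixes g :: "real \<Rightarrow> real"
  assumes "a \<le> b" and g: "abs_continuous_on g a b"
    and deriv: "AE t in lebesgue. t \<in> {a..b} \<longrightarrow>
      (\<exists>D. (g has_real_derivative D) (at t within {a..b}) \<and> D \<le> 0)"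
  shows "g b \<le> g a"
proof (rule field_le_epsilon)
  fix \<eta> :: real assume "\<eta> > 0"
  then have "\<eta> / 2 > 0" by simp
  then obtain \<delta> where "\<delta> > 0" and \<delta>: "\<And>p U. p tagged_partial_division_of {a..b} \<Longrightarrow>
      (\<And>x K. (x, K) \<in> p \<Longrightarrow> K \<subseteq> U) \<Longrightarrow> U \<in> lmeasurable \<Longrightarrow> measure lebesgue U < \<delta> \<Longrightarrow>
      (\<Sum>(x, K)\<in>p. norm (g (Sup K) - g (Inf K))) < \<eta> / 2"
    by (rule abs_continuous_on_tagged_partial_division_sum[OF g]) blast
  obtain N where N: "N \<in> null_sets lebesgue"
    and good: "\<forall>t\<in>{a..b} - N. \<exists>D. (g has_real_derivative D) (at t within {a..b}) \<and> D \<le> 0"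
    using deriv unfolding eventually_ae_filter by (elim bexE) (auto intro: that simp: subset_iff)
  obtain U where U: "open U" "N \<subseteq> U" "U \<in> lmeasurable" "measure lebesgue U < \<delta>"
    using null_sets_lebesgue_open_superset[OF N \<open>\<delta> > 0\<close>] by blast
  define \<epsilon> where "\<epsilon> = \<eta> / (2 * (b - a + 1))"
  have "\<epsilon> > 0" using \<open>\<eta> > 0\<close> \<open>a \<le> b\<close> by (simp add: \<epsilon>_def)
  obtain \<rho> where \<rho>: "\<And>t. \<rho> t > 0" "\<And>t. t \<in> N \<Longrightarrow> ball t (\<rho> t) \<subseteq> U"
    "\<And>t u v. t \<in> {a..b} - N \<Longrightarrow> u \<in> {a..b} \<Longrightarrow> v \<in> {a..b} \<Longrightarrow> u \<le> t \<Longrightarrow> t \<le> v \<Longrightarrow>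
       {u..v} \<subseteq> ball t (\<rho> t) \<Longrightarrow> g v - g u \<le> \<epsilon> * (v - u)"
    by (rule nonpos_derivative_adapted_gauge[OF U(1,2) \<open>\<epsilon> > 0\<close> good]) (rule that)
  have "gauge (\<lambda>t. ball t (\<rho> t))" using \<rho>(1) by (intro gauge_ball_dependent) auto
  then obtain p where p: "p tagged_division_of {a..b}" and "(\<lambda>t. ball t (\<rho> t)) fine p"
    using fine_division_exists[of _ a b] by auto
  then have fine: "K \<subseteq> ball x (\<rho> x)" if "(x, K) \<in> p" for x K
    using that by (auto simp: fine_def)
  have pp: "p tagged_partial_division_of {a..b}" using p by (simp add: tagged_division_of_def)
  note Icc = tagged_partial_division_of_IccD[OF pp]
  define pN where "pN = {xK \<in> p. fst xK \<in> N}"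
  have "g b - g a = (\<Sum>(x, K)\<in>p. g (Sup K) - g (Inf K))"
    by (simp add: additive_tagged_division_1[OF \<open>a \<le> b\<close> p])
  also have "\<dots> = (\<Sum>(x, K)\<in>p - pN. g (Sup K) - g (Inf K)) + (\<Sum>(x, K)\<in>pN. g (Sup K) - g (Inf K))"
    using p by (intro sum.subset_diff) (auto simp: pN_def)
  also have "\<dots> \<le> \<epsilon> * (b - a) + \<eta> / 2"
  proof (rule add_mono)
    show "(\<Sum>(x, K)\<in>p - pN. g (Sup K) - g (Inf K)) \<le> \<epsilon> * (b - a)"
    proof (rule tagged_division_sum_le_length[OF \<open>a \<le> b\<close> p _ less_imp_le[OF \<open>\<epsilon> > 0\<close>]])
      fix x K assume xK: "(x, K) \<in> p - pN"
      then have "x \<in> {a..b} - N" using Icc(2-5)[of x K] by (auto simp: pN_def)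
      moreover have "{Inf K..Sup K} \<subseteq> ball x (\<rho> x)" using fine[of x K] xK Icc(1)[of x K] by simp
      ultimately show "g (Sup K) - g (Inf K) \<le> \<epsilon> * (Sup K - Inf K)"
        using \<rho>(3)[of x "Inf K" "Sup K"] xK Icc(2-5)[of x K] by simp
    qed auto
    have "(\<Sum>(x, K)\<in>pN. g (Sup K) - g (Inf K)) \<le> (\<Sum>(x, K)\<in>pN. norm (g (Sup K) - g (Inf K)))"
      by (intro sum_mono) auto
    also have "\<dots> < \<eta> / 2"
    proof (rule \<delta>)
      show "pN tagged_partial_division_of {a..b}"
        by (rule tagged_partial_division_subset[OF pp]) (auto simp: pN_def)
      show "K \<subseteq> U" if "(x, K) \<in> pN" for x K
        using that fine[of x K] \<rho>(2)[of x] by (auto simp: pN_def)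
    qed (use U in auto)
    finally show "(\<Sum>(x, K)\<in>pN. g (Sup K) - g (Inf K)) \<le> \<eta> / 2" by simp
  qed
  also have "\<dots> \<le> \<eta>"
    using \<open>\<eta> > 0\<close> \<open>a \<le> b\<close> by (simp add: \<epsilon>_def field_simps)
  finally show "g b \<le> g a + \<eta>" by simp
qed

section \<open>Lyapunov decay along hybrid solutions\<close>

lemma C1_imp_lipschitz_on_cball:
  fixes f :: "'a::euclidean_space \<Rightarrow> 'b::real_normed_vector"
  assumes "\<And>x. (f has_derivative blinfun_apply (f' x)) (at x)" and "continuous_on UNIV f'"
  shows "\<exists>L. L-lipschitz_on (cball c R) f"
proof -
  have "bounded (f' ` cball c R)"
    using assms(2) by (intro compact_imp_bounded compact_continuous_image compact_cball)
      (rule continuous_on_subset, auto)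
  then obtain B where "B > 0" and B: "\<And>x. x \<in> cball c R \<Longrightarrow> norm (f' x) \<le> B"
    unfolding bounded_pos by blast
  have "B-lipschitz_on (cball c R) f"
    using B \<open>B > 0\<close> by (intro bounded_derivative_imp_lipschitz[where f' = "\<lambda>x. blinfun_apply (f' x)"]
        has_derivative_at_withinI[OF assms(1)]) (auto simp: norm_blinfun.rep_eq[symmetric] less_imp_le)
  then show ?thesis ..
qed

lemma hybrid_time_domainE:
  assumes "hybrid_time_domain E" "(t, j) \<in> E"
  obtains tt where "tt 0 = 0" "\<And>i. i \<le> j \<Longrightarrow> tt i \<le> tt (Suc i)" "t \<in> {tt j..tt (Suc j)}"
    "\<And>i s. i \<le> j \<Longrightarrow> s \<in> {tt i..tt (Suc i)} \<Longrightarrow> (s, i) \<in> E \<and> 0 \<le> s \<and> s \<le> t"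
proof -
  have "0 \<le> t" using assms unfolding hybrid_time_domain_def by auto
  obtain tt where tt: "tt 0 = 0" "\<And>i. i \<le> j \<Longrightarrow> tt i \<le> tt (Suc i)"
    and E: "E \<inter> ({0..t} \<times> {0..j}) = (\<Union>i\<in>{0..j}. {tt i..tt (Suc i)} \<times> {i})"
    using assms unfolding hybrid_time_domain_def by fastforce
  show thesis
  proof (rule that[OF tt])
    have "(t, j) \<in> E \<inter> ({0..t} \<times> {0..j})" using assms(2) \<open>0 \<le> t\<close> by auto
    then show "t \<in> {tt j..tt (Suc j)}" unfolding E by auto
    show "(s, i) \<in> E \<and> 0 \<le> s \<and> s \<le> t" if "i \<le> j" "s \<in> {tt i..tt (Suc i)}" for i s
    proof -
      have "(s, i) \<in> E \<inter> ({0..t} \<times> {0..j})" using E that by auto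
      then show ?thesis by auto
    qed
  qed
qed

lemma hybrid_solution_flow_derivative:
  assumes sol: "hybrid_solution Q F C D G w E q" and "l < r" and lr: "{l..r} \<subseteq> flow_interval E j"
  shows "AE s in lebesgue. s \<in> {l..r} \<longrightarrow>
    ((\<lambda>s. q (s, j)) has_vector_derivative F (q (s, j)) (w s)) (at s within {l..r}) \<and> q (s, j) \<in> C"
proof -
  have "{(l + r) / 2} \<subseteq> interior (flow_interval E j)"
    using interior_mono[OF lr] \<open>l < r\<close> by auto
  then have "AE s in lebesgue. s \<in> flow_interval E j \<longrightarrow> ((\<lambda>s. q (s, j)) has_vector_derivative
      F (q (s, j)) (w s)) (at s within flow_interval E j) \<and> q (s, j) \<in> C"
    using sol unfolding hybrid_solution_def by blast
  then show ?thesis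
    by eventually_elim (use lr in \<open>auto intro: has_vector_derivative_within_subset\<close>)
qed

lemma hybrid_solution_flow_decay:
  fixes q :: "real \<times> nat \<Rightarrow> 'q::real_normed_vector" and W :: "'q \<Rightarrow> real"
  assumes sol: "hybrid_solution Q F C D G w E q"
    and W': "\<And>x. (W has_derivative W' x) (at x)"
    and W_lipschitz: "\<And>R. \<exists>L. L-lipschitz_on (cball 0 R) W"
    and flow: "AE s in lebesgue. s \<in> {l..r} \<longrightarrow> (\<forall>x\<in>C. W' x (F x (w s)) \<le> B - k * W x)"
    and "k > 0" and lr: "l \<le> r" "{l..r} \<subseteq> flow_interval E j"
  shows "exp (k * r) * (W (q (r, j)) - B / k) \<le> exp (k * l) * (W (q (l, j)) - B / k)"
proof (cases "l = r")
  case False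
  with lr(1) have "l < r" by simp
  define \<gamma> where "\<gamma> = (\<lambda>s. q (s, j))"
  have ac: "abs_continuous_on \<gamma> l r"
    using sol lr(2) unfolding hybrid_solution_def hybrid_arc_def loc_abs_continuous_on_def \<gamma>_def by blast
  have "bounded (\<gamma> ` {l..r})"
    by (intro compact_imp_bounded compact_continuous_image abs_continuous_on_imp_continuous_on[OF ac]
        compact_Icc)
  then obtain R where "\<And>s. s \<in> {l..r} \<Longrightarrow> norm (\<gamma> s) \<le> R"
    unfolding bounded_iff by blast
  then have R: "\<gamma> ` {l..r} \<subseteq> cball 0 R" by auto
  obtain L where "L-lipschitz_on (cball 0 R) W" using W_lipschitz by blast
  then have "L-lipschitz_on (cball 0 R) (\<lambda>x. W x - B / k)"
    using lipschitz_on_diff[OF _ lipschitz_on_constant] by fastforce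
  then have "abs_continuous_on (\<lambda>s. exp (k * s) * (W (\<gamma> s) - B / k)) l r"
    by (intro abs_continuous_on_mult abs_continuous_on_exp
        abs_continuous_on_lipschitz_compose[OF ac _ R])
  moreover have "AE s in lebesgue. s \<in> {l..r} \<longrightarrow> (\<exists>D. ((\<lambda>s. exp (k * s) * (W (\<gamma> s) - B / k))
      has_real_derivative D) (at s within {l..r}) \<and> D \<le> 0)"
    using hybrid_solution_flow_derivative[OF sol \<open>l < r\<close> lr(2)] flow
  proof (eventually_elim, intro impI)
    fix s assume s: "s \<in> {l..r}"
      and "s \<in> {l..r} \<longrightarrow> ((\<lambda>s. q (s, j)) has_vector_derivative F (q (s, j)) (w s)) (at s within {l..r})
        \<and> q (s, j) \<in> C"
      and bound: "s \<in> {l..r} \<longrightarrow> (\<forall>x\<in>C. W' x (F x (w s)) \<le> B - k * W x)"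
    with s have "(\<gamma> has_vector_derivative F (\<gamma> s) (w s)) (at s within {l..r})" "\<gamma> s \<in> C"
      by (simp_all add: \<gamma>_def)
    then have "((\<lambda>s. W (\<gamma> s)) has_real_derivative W' (\<gamma> s) (F (\<gamma> s) (w s))) (at s within {l..r})"
      using vector_derivative_diff_chain_within[OF _ has_derivative_at_withinI[OF W']]
      by (simp add: has_real_derivative_iff_has_vector_derivative o_def)
    then have "((\<lambda>s. exp (k * s) * (W (\<gamma> s) - B / k)) has_real_derivative
        exp (k * s) * (k * (W (\<gamma> s) - B / k) + W' (\<gamma> s) (F (\<gamma> s) (w s)))) (at s within {l..r})"
      by (auto intro!: derivative_eq_intros simp: algebra_simps)
    moreover have "k * (W (\<gamma> s) - B / k) + W' (\<gamma> s) (F (\<gamma> s) (w s)) \<le> 0"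
      using bound s \<open>\<gamma> s \<in> C\<close> \<open>k > 0\<close> by (auto simp: right_diff_distrib)
    ultimately show "\<exists>D. ((\<lambda>s. exp (k * s) * (W (\<gamma> s) - B / k)) has_real_derivative D)
        (at s within {l..r}) \<and> D \<le> 0"
      by (meson exp_ge_zero mult_nonneg_nonpos)
  qed
  ultimately show ?thesis
    unfolding \<gamma>_def by (rule abs_continuous_on_nonpos_derivative_imp_le[OF lr(1)])
qed simp

lemma hybrid_solution_decay:
  fixes q :: "real \<times> nat \<Rightarrow> 'q::real_normed_vector" and W :: "'q \<Rightarrow> real"
  assumes sol: "hybrid_solution Q F C D G w E q"
    and W': "\<And>x. (W has_derivative W' x) (at x)"
    and W_lipschitz: "\<And>R. \<exists>L. L-lipschitz_on (cball 0 R) W"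
    and flow: "AE s in lebesgue. s \<in> {0..t} \<longrightarrow> (\<forall>x\<in>C. W' x (F x (w s)) \<le> B - k * W x)"
    and jump: "\<And>x x'. x \<in> D \<Longrightarrow> x' \<in> G x \<Longrightarrow> W x' \<le> W x"
    and "k > 0" and tj: "(t, j) \<in> E"
  shows "W (q (t, j)) \<le> exp (- k * t) * (W (q (0, 0)) - B / k) + B / k"
proof -
  have "hybrid_time_domain E" using sol unfolding hybrid_solution_def hybrid_arc_def by blast
  then obtain tt where tt: "tt 0 = 0" "\<And>i. i \<le> j \<Longrightarrow> tt i \<le> tt (Suc i)" "t \<in> {tt j..tt (Suc j)}"
    and seg: "\<And>i s. i \<le> j \<Longrightarrow> s \<in> {tt i..tt (Suc i)} \<Longrightarrow> (s, i) \<in> E \<and> 0 \<le> s \<and> s \<le> t"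
    using tj by (rule hybrid_time_domainE) blast
  define \<phi> where "\<phi> s i = exp (k * s) * (W (q (s, i)) - B / k)" for s i
  have flow_step: "\<phi> s i \<le> \<phi> (tt i) i" if "i \<le> j" "s \<in> {tt i..tt (Suc i)}" for i s
    unfolding \<phi>_def
  proof (rule hybrid_solution_flow_decay[OF sol W' W_lipschitz _ \<open>k > 0\<close>])
    show "AE \<tau> in lebesgue. \<tau> \<in> {tt i..s} \<longrightarrow> (\<forall>x\<in>C. W' x (F x (w \<tau>)) \<le> B - k * W x)"
      using flow by eventually_elim (use seg[OF that(1)] that(2) in auto)
    show "{tt i..s} \<subseteq> flow_interval E i"
      using seg[OF that(1)] that(2) by (auto simp: flow_interval_def)
  qed (use that in auto)
  have jump_step: "\<phi> (tt (Suc i)) (Suc i) \<le> \<phi> (tt (Suc i)) i" if "Suc i \<le> j" for i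
  proof -
    have "(tt (Suc i), i) \<in> E" "(tt (Suc i), Suc i) \<in> E"
      using seg[of i "tt (Suc i)"] seg[of "Suc i" "tt (Suc i)"] tt(2)[of i] tt(2)[of "Suc i"] that
      by auto
    then have "W (q (tt (Suc i), Suc i)) \<le> W (q (tt (Suc i), i))"
      using sol jump unfolding hybrid_solution_def by blast
    then show ?thesis unfolding \<phi>_def by simp
  qed
  have "\<phi> (tt i) i \<le> \<phi> 0 0" if "i \<le> j" for i
    using that
  proof (induction i)
    case (Suc i)
    then have "\<phi> (tt (Suc i)) (Suc i) \<le> \<phi> (tt (Suc i)) i" by (intro jump_step)
    also have "\<dots> \<le> \<phi> (tt i) i" using Suc.prems tt(2)[of i] by (intro flow_step) auto
    also have "\<dots> \<le> \<phi> 0 0" using Suc by simp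
    finally show ?case .
  qed (simp add: tt(1))
  with flow_step[OF order_refl tt(3)] have "exp (k * t) * (W (q (t, j)) - B / k) \<le> W (q (0, 0)) - B / k"
    by (force simp: \<phi>_def)
  then have "W (q (t, j)) - B / k \<le> exp (- k * t) * (W (q (0, 0)) - B / k)"
    by (simp add: exp_minus field_simps)
  then show ?thesis by simp
qed

section \<open>The event-triggered observer\<close>

definition hybrid_lyapunov ::
  "('x \<Rightarrow> 'z \<Rightarrow> real) \<Rightarrow> ('n::finite \<Rightarrow> real) \<Rightarrow> ('x, 'z, 'y, 'n) hstate \<Rightarrow> real" where
  "hybrid_lyapunov V d Q = V (fst Q) (fst (snd Q)) + (\<Sum>i\<in>UNIV. d i * snd (snd (snd Q)) $ i)"

definition hybrid_lyapunov_deriv ::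
  "('x::real_normed_vector \<Rightarrow> 'z::real_normed_vector \<Rightarrow> ('x \<times> 'z) \<Rightarrow>\<^sub>L real) \<Rightarrow> ('n::finite \<Rightarrow> real)
    \<Rightarrow> ('x, 'z, 'y, 'n) hstate \<Rightarrow> ('x, 'z, 'y, 'n) hstate \<Rightarrow> real"
  where "hybrid_lyapunov_deriv DV d Q h =
    DV (fst Q) (fst (snd Q)) (fst h, fst (snd h)) + (\<Sum>i\<in>UNIV. d i * snd (snd (snd h)) $ i)"

lemma hybrid_lyapunov_has_derivative:
  fixes V :: "'x::real_normed_vector \<Rightarrow> 'z::real_normed_vector \<Rightarrow> real"
  assumes "\<And>x z. ((\<lambda>p. V (fst p) (snd p)) has_derivative blinfun_apply (DV x z)) (at (x, z))"
  shows "(hybrid_lyapunov V d has_derivative hybrid_lyapunov_deriv DV d Q)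
    (at (Q :: ('x, 'z, 'y::real_normed_vector, 'n::finite) hstate))"
proof -
  have "((\<lambda>Q. (fst Q, fst (snd Q))) has_derivative (\<lambda>h. (fst h, fst (snd h)))) (at Q)"
    by (intro has_derivative_Pair has_derivative_fst has_derivative_snd has_derivative_ident)
  from has_derivative_compose[OF this assms[of "fst Q" "fst (snd Q)"]]
  have "((\<lambda>Q. V (fst Q) (fst (snd Q))) has_derivative
      (\<lambda>h. DV (fst Q) (fst (snd Q)) (fst h, fst (snd h)))) (at Q)"
    by simp
  then show ?thesis unfolding hybrid_lyapunov_def hybrid_lyapunov_deriv_def[abs_def]
    by (auto intro!: derivative_eq_intros bounded_linear.has_derivative[OF bounded_linear_vec_nth])
qed

lemma hybrid_lyapunov_lipschitz:
  fixes V :: "'x::euclidean_space \<Rightarrow> 'z::euclidean_space \<Rightarrow> real"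
  assumes "\<And>x z. ((\<lambda>p. V (fst p) (snd p)) has_derivative blinfun_apply (DV x z)) (at (x, z))"
    and "continuous_on UNIV (\<lambda>(x, z). DV x z)"
  shows "\<exists>L. L-lipschitz_on (cball 0 R)
    (hybrid_lyapunov V d :: ('x, 'z, 'y::euclidean_space, 'n::finite) hstate \<Rightarrow> real)"
proof -
  let ?P = "\<lambda>Q :: ('x, 'z, 'y, 'n) hstate. (fst Q, fst (snd Q))"
  let ?\<eta> = "\<lambda>Q :: ('x, 'z, 'y, 'n) hstate. \<Sum>i\<in>UNIV. d i * snd (snd (snd Q)) $ i"
  have P: "bounded_linear ?P" and \<eta>: "bounded_linear ?\<eta>"
    by (auto intro!: bounded_linear_intros bounded_linear_compose[OF bounded_linear_vec_nth])
  obtain LP where LP: "LP-lipschitz_on (cball 0 R) ?P" by (rule bounded_linear.lipschitz_boundE[OF P])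
  obtain L\<eta> where L\<eta>: "L\<eta>-lipschitz_on (cball 0 R) ?\<eta>" by (rule bounded_linear.lipschitz_boundE[OF \<eta>])
  have "bounded (?P ` cball 0 R)"
    using P by (intro bounded_linear_image bounded_cball)
  then obtain R' where "\<And>Q. Q \<in> cball 0 R \<Longrightarrow> norm (?P Q) \<le> R'"
    unfolding bounded_iff by blast
  then have P_image: "?P ` cball 0 R \<subseteq> cball 0 R'" by auto
  have "((\<lambda>p. V (fst p) (snd p)) has_derivative blinfun_apply (DV (fst p) (snd p))) (at p)" for p
    using assms(1)[of "fst p" "snd p"] by simp
  then have "\<exists>LV. LV-lipschitz_on (cball 0 R') (\<lambda>p. V (fst p) (snd p))"
    using assms(2) by (intro C1_imp_lipschitz_on_cball) (auto simp: split_def)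
  then obtain LV where LV: "LV-lipschitz_on (cball 0 R') (\<lambda>p. V (fst p) (snd p))" ..
  have "(LV * LP)-lipschitz_on (cball 0 R) (\<lambda>Q :: ('x, 'z, 'y, 'n) hstate. V (fst Q) (fst (snd Q)))"
    using lipschitz_on_compose2[OF LP lipschitz_on_subset[OF LV P_image]] by simp
  from lipschitz_on_add[OF this L\<eta>] show ?thesis
    unfolding hybrid_lyapunov_def split_def by blast
qed

lemma hybrid_lyapunov_jump:
  assumes "\<And>i. 0 \<le> d i" and "\<And>i. b i \<le> 1"
    and "Q \<in> H_D node \<alpha>s \<sigma> \<epsilon> \<gamma>" and "Q' \<in> H_G node \<alpha>s \<sigma> \<epsilon> \<gamma> b Q"
  shows "hybrid_lyapunov V d Q' \<le> hybrid_lyapunov V d Q"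
proof -
  obtain x z e \<eta> where Q: "Q = (x, z, e, \<eta>)" by (cases Q) auto
  then obtain i where "Q \<in> H_Di node \<alpha>s \<sigma> \<epsilon> \<gamma> i"
    and Q': "Q' = (x, z, e - node_part node i e, \<chi> k. if k = i then b i * \<eta> $ i else \<eta> $ k)"
    using assms(3,4) unfolding H_G_def H_D_def by (auto split: if_splits)
  then have "\<eta> $ i \<ge> 0" by (simp add: H_Di_def H_Q_def Q)
  then have "b i * \<eta> $ i \<le> \<eta> $ i" using mult_right_mono[OF assms(2)] by simp
  then have "d k * (if k = i then b i * \<eta> $ i else \<eta> $ k) \<le> d k * \<eta> $ k" for k
    using assms(1) by (auto intro: mult_left_mono)
  then show ?thesis unfolding Q Q' hybrid_lyapunov_def by (auto intro: sum_mono)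
qed

lemma node_gain_bounds:
  fixes \<sigma>s cs aU as :: real
  assumes "0 < \<sigma>s" "0 \<le> cs" "\<sigma>s * cs < 1" "0 < aU" "aU / (1 - \<sigma>s * cs) < as"
  shows "0 < as" and "0 < 1 - \<sigma>s * cs - aU / as"
    and "\<sigma>s / (1 - \<sigma>s * cs) < \<sigma>s / (1 - \<sigma>s * cs - aU / as)"
proof -
  have "0 < 1 - \<sigma>s * cs" using assms(3) by simp
  with assms(5) have "aU < as * (1 - \<sigma>s * cs)" by (simp add: divide_less_eq)
  moreover show "0 < as" using assms(4,5) \<open>0 < 1 - \<sigma>s * cs\<close> by (meson divide_pos_pos less_trans)
  ultimately show "0 < 1 - \<sigma>s * cs - aU / as" by (simp add: field_simps)
  moreover have "aU / as > 0" using assms(4) \<open>0 < as\<close> by simp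
  ultimately show "\<sigma>s / (1 - \<sigma>s * cs) < \<sigma>s / (1 - \<sigma>s * cs - aU / as)"
    using assms(1) by (intro divide_strict_left_mono) auto
qed

lemma node_dissipation:
  fixes \<sigma>s cs aU as :: real
  defines "d \<equiv> \<sigma>s / (1 - \<sigma>s * cs - aU / as)"
  assumes gain: "0 < \<sigma>s" "0 \<le> cs" "\<sigma>s * cs < 1" "0 < aU" "aU / (1 - \<sigma>s * cs) < as"
    and c: "0 \<le> c" "c \<le> cs" and \<sigma>: "0 \<le> \<sigma>" "\<sigma> \<le> \<sigma>s" and ai: "as \<le> ai" and \<eta>: "0 \<le> \<eta>"
    and g: "g \<le> \<sigma> * (ai * \<eta>) + \<epsilon>" and \<epsilon>: "0 \<le> \<epsilon>" "\<epsilon> \<le> \<epsilon>s" and \<zeta>: "d * cs \<le> \<zeta>"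
  shows "g + d * (- (ai * \<eta>) + c * g) \<le> (1 + \<zeta>) * \<epsilon>s - aU * d * \<eta>"
proof -
  note bounds = node_gain_bounds[OF gain]
  have "0 < as" by (rule bounds(1))
  have "0 < d" using bounds(2) gain(1) by (simp add: d_def)
  \<comment> \<open>This identity is what determines the gain \<open>d\<close>.\<close>
  have key: "\<sigma>s * (1 + d * cs) = d * (1 - aU / as)"
    using bounds(2) by (simp add: d_def field_simps)
  have dc: "0 \<le> d * c" "d * c \<le> d * cs" using \<open>0 < d\<close> c by (auto intro: mult_left_mono)
  have "(1 + d * c) * \<sigma> * ai \<le> \<sigma>s * (1 + d * cs) * ai"
    using dc \<sigma> ai \<open>0 < as\<close> by (intro mult_right_mono) (auto simp: mult.commute intro: mult_mono)
  also have "\<dots> = d * (1 - aU / as) * ai" using key by simp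
  also have "\<dots> = d * ai - aU * d * (ai / as)" using \<open>0 < as\<close> by (simp add: field_simps)
  also have "\<dots> \<le> d * ai - aU * d"
    using \<open>0 < d\<close> gain(4) ai \<open>0 < as\<close> by (simp add: mult_le_cancel_left1 le_divide_eq)
  finally have A: "(1 + d * c) * \<sigma> * ai * \<eta> \<le> (d * ai - aU * d) * \<eta>"
    using \<eta> by (intro mult_right_mono)
  have B: "(1 + d * c) * \<epsilon> \<le> (1 + \<zeta>) * \<epsilon>s"
    using dc \<epsilon> \<zeta> by (intro mult_mono) auto
  have "g + d * (- (ai * \<eta>) + c * g) = (1 + d * c) * g - d * ai * \<eta>" by (simp add: algebra_simps)
  also have "\<dots> \<le> (1 + d * c) * (\<sigma> * (ai * \<eta>) + \<epsilon>) - d * ai * \<eta>"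
    using dc g by (simp add: mult_left_mono)
  also have "\<dots> \<le> (1 + \<zeta>) * \<epsilon>s - aU * d * \<eta>"
    using A B by (simp add: algebra_simps)
  finally show ?thesis .
qed

lemma hybrid_lyapunov_flow_bound:
  fixes g d c ai \<epsilon>s :: "'n::finite \<Rightarrow> real"
  assumes dissip: "Vd \<le> - a * V + (\<Sum>i\<in>UNIV. g i) + \<theta>v" and "aU \<le> a" "0 \<le> V"
    and node: "\<And>i. g i + d i * (- (ai i * \<eta> $ i) + c i * g i)
      \<le> (1 + \<zeta>) * \<epsilon>s i - aU * d i * \<eta> $ i"
    and \<epsilon>s: "(1 + \<zeta>) * (\<Sum>i\<in>UNIV. \<epsilon>s i) \<le> aU * \<mu>"
  shows "Vd + (\<Sum>i\<in>UNIV. d i * (- (ai i * \<eta> $ i) + c i * g i))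
    \<le> aU * \<mu> + \<theta>v - aU * (V + (\<Sum>i\<in>UNIV. d i * \<eta> $ i))"
proof -
  have "(\<Sum>i\<in>UNIV. g i) + (\<Sum>i\<in>UNIV. d i * (- (ai i * \<eta> $ i) + c i * g i))
      \<le> (1 + \<zeta>) * (\<Sum>i\<in>UNIV. \<epsilon>s i) - aU * (\<Sum>i\<in>UNIV. d i * \<eta> $ i)"
  proof -
    have "(\<Sum>i\<in>UNIV. g i + d i * (- (ai i * \<eta> $ i) + c i * g i))
        \<le> (\<Sum>i\<in>UNIV. (1 + \<zeta>) * \<epsilon>s i - aU * d i * \<eta> $ i)"
      by (rule sum_mono) (rule node)
    then show ?thesis by (simp add: sum.distrib sum_subtractf sum_distrib_left mult.assoc)
  qed
  moreover have "aU * V \<le> a * V" using \<open>aU \<le> a\<close> \<open>0 \<le> V\<close> by (rule mult_right_mono)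
  ultimately show ?thesis using dissip \<epsilon>s by (simp add: algebra_simps)
qed

lemma H_flow_lyapunov_bound:
  fixes \<alpha>s :: "'n::finite \<Rightarrow> real \<Rightarrow> real"
  assumes V_dissip: "\<And>x z u v e yh. u \<in> Uset \<Longrightarrow> v \<in> Vset \<Longrightarrow>
        blinfun_apply (DV x z) (fp x u v, fo z u (h x + e) yh)
          \<le> - \<alpha> (Vf x z) + (\<Sum>i\<in>UNIV. \<gamma> i (norm (node_part node i e))) + \<theta> (norm v)"
    and V_nonneg: "\<And>x z. 0 \<le> Vf x z" and \<alpha>_lin: "\<And>s. s \<ge> 0 \<Longrightarrow> \<alpha> s = a * s" and "aU \<le> a"
    and \<alpha>s_lin: "\<And>i s. s \<ge> 0 \<Longrightarrow> \<alpha>s i s = ai i * s"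
    and node: "\<And>i s g. 0 \<le> s \<Longrightarrow> g \<le> \<sigma> i * (ai i * s) + \<epsilon> i \<Longrightarrow>
        g + d i * (- (ai i * s) + c i * g) \<le> (1 + \<zeta>) * \<epsilon>s i - aU * d i * s"
    and \<epsilon>s: "(1 + \<zeta>) * (\<Sum>i\<in>UNIV. \<epsilon>s i) \<le> aU * \<mu>"
    and Q: "Q \<in> H_C node \<alpha>s \<sigma> \<epsilon> \<gamma>" and "u \<in> Uset" "v \<in> Vset"
  shows "hybrid_lyapunov_deriv DV d Q (H_F fp fo h Dh \<psi> node \<alpha>s c \<gamma> Q (u, v))
    \<le> aU * \<mu> + \<theta> (norm v) - aU * hybrid_lyapunov Vf d Q"
proof -
  obtain x z e \<eta> where Q_def: "Q = (x, z, e, \<eta>)" by (cases Q) auto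
  with Q have \<eta>: "\<And>i. 0 \<le> \<eta> $ i"
    and \<gamma>: "\<And>i. \<gamma> i (norm (node_part node i e)) \<le> \<sigma> i * (ai i * \<eta> $ i) + \<epsilon> i"
    by (auto simp: H_C_def H_Q_def \<alpha>s_lin)
  have "DV x z (fp x u v, fo z u (h x + e) (h (\<psi> z))) \<le>
      - a * Vf x z + (\<Sum>i\<in>UNIV. \<gamma> i (norm (node_part node i e))) + \<theta> (norm v)"
    using V_dissip[OF \<open>u \<in> Uset\<close> \<open>v \<in> Vset\<close>] \<alpha>_lin[OF V_nonneg] by simp
  from hybrid_lyapunov_flow_bound[OF this \<open>aU \<le> a\<close> V_nonneg node[OF \<eta> \<gamma>] \<epsilon>s]
  show ?thesis by (simp add: Q_def H_F_def hybrid_lyapunov_def hybrid_lyapunov_deriv_def \<alpha>s_lin \<eta>)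
qed

lemma ess_sup_norm_bound:
  fixes v :: "real \<Rightarrow> 'a::real_normed_vector"
  assumes "\<exists>M. AE s in lebesgue. s \<in> {t1..t2} \<longrightarrow> norm (v s) \<le> M"
  shows "AE s in lebesgue. s \<in> {t1..t2} \<longrightarrow> norm (v s) \<le> ess_sup_norm v t1 t2"
    and "0 \<le> ess_sup_norm v t1 t2"
proof -
  define S where "S = {M. 0 \<le> M \<and> (AE s in lebesgue. s \<in> {t1..t2} \<longrightarrow> norm (v s) \<le> M)}"
  have es: "ess_sup_norm v t1 t2 = Inf S" by (simp add: S_def ess_sup_norm_def)
  obtain M where "AE s in lebesgue. s \<in> {t1..t2} \<longrightarrow> norm (v s) \<le> M" using assms by blast
  then have "max M 0 \<in> S" unfolding S_def by (auto elim!: eventually_mono)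
  then have "S \<noteq> {}" by blast
  have "bdd_below S" unfolding S_def by (rule bdd_belowI[of _ 0]) auto
  show "0 \<le> ess_sup_norm v t1 t2" unfolding es by (rule cInf_greatest[OF \<open>S \<noteq> {}\<close>]) (auto simp: S_def)
  have "\<forall>n::nat. \<exists>M\<in>S. M < Inf S + 1 / Suc n"
    using cInf_less_iff[OF \<open>S \<noteq> {}\<close> \<open>bdd_below S\<close>] by (metis less_add_same_cancel1 of_nat_0_less_iff
        zero_less_Suc zero_less_divide_1_iff)
  then obtain Mn where Mn: "\<And>n. Mn n \<in> S" "\<And>n. Mn n < Inf S + 1 / Suc n" by metis
  then have "\<forall>n. AE s in lebesgue. s \<in> {t1..t2} \<longrightarrow> norm (v s) \<le> Mn n" by (auto simp: S_def)
  then have "AE s in lebesgue. \<forall>n. s \<in> {t1..t2} \<longrightarrow> norm (v s) \<le> Mn n"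
    by (rule AE_all_countable[THEN iffD2])
  then show "AE s in lebesgue. s \<in> {t1..t2} \<longrightarrow> norm (v s) \<le> ess_sup_norm v t1 t2"
  proof (rule eventually_mono, intro impI)
    fix s assume H: "\<forall>n. s \<in> {t1..t2} \<longrightarrow> norm (v s) \<le> Mn n" and "s \<in> {t1..t2}"
    show "norm (v s) \<le> ess_sup_norm v t1 t2"
    proof (rule ccontr)
      assume "\<not> ?thesis"
      then obtain n where "inverse (Suc n) < norm (v s) - Inf S"
        unfolding es using reals_Archimedean by (metis diff_gt_0_iff_gt not_le)
      moreover have "norm (v s) \<le> Mn n" using H \<open>s \<in> {t1..t2}\<close> by blast
      ultimately show False using Mn(2)[of n] by (simp add: inverse_eq_divide)
    qed
  qed
qed

lemma L_signal_ess_sup_norm_snd: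
  assumes "L_signal (U \<times> V) w" "0 \<le> t"
  shows "AE s in lebesgue. s \<in> {0..t} \<longrightarrow>
      w s \<in> U \<times> V \<and> norm (snd (w s)) \<le> ess_sup_norm (\<lambda>s. snd (w s)) 0 t"
    and "0 \<le> ess_sup_norm (\<lambda>s. snd (w s)) 0 t"
proof -
  obtain M where "AE s in lebesgue. s \<in> {0..t} \<longrightarrow> norm (w s) \<le> M"
    using assms unfolding L_signal_def by blast
  then have "AE s in lebesgue. s \<in> {0..t} \<longrightarrow> norm (snd (w s)) \<le> M"
    by eventually_elim (metis norm_snd_le order_trans prod.collapse)
  then have "\<exists>M. AE s in lebesgue. s \<in> {0..t} \<longrightarrow> norm (snd (w s)) \<le> M" ..
  note ess = ess_sup_norm_bound[OF this]
  show "0 \<le> ess_sup_norm (\<lambda>s. snd (w s)) 0 t" by (rule ess(2))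
  show "AE s in lebesgue. s \<in> {0..t} \<longrightarrow>
      w s \<in> U \<times> V \<and> norm (snd (w s)) \<le> ess_sup_norm (\<lambda>s. snd (w s)) 0 t"
    using ess(1) by eventually_elim (use assms in \<open>auto simp: L_signal_def\<close>)
qed

lemma H_solution_lyapunov_bound:
  fixes fp :: "'x::euclidean_space \<Rightarrow> 'u::euclidean_space \<Rightarrow> 'v::euclidean_space \<Rightarrow> 'x"
    and fo :: "'z::euclidean_space \<Rightarrow> 'u \<Rightarrow> 'y::euclidean_space \<Rightarrow> 'y \<Rightarrow> 'z"
    and node :: "'y \<Rightarrow> 'n::finite"
    and q :: "real \<times> nat \<Rightarrow> ('x, 'z, 'y, 'n) hstate"
  assumes V_deriv: "\<And>x z. ((\<lambda>p. Vf (fst p) (snd p)) has_derivative blinfun_apply (DV x z)) (at (x, z))"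
    and V_C1: "continuous_on UNIV (\<lambda>(x, z). DV x z)"
    and V_dissip: "\<And>x z u v e yh. u \<in> Uset \<Longrightarrow> v \<in> Vset \<Longrightarrow>
        blinfun_apply (DV x z) (fp x u v, fo z u (h x + e) yh)
          \<le> - \<alpha> (Vf x z) + (\<Sum>i\<in>UNIV. \<gamma> i (norm (node_part node i e))) + \<theta> (norm v)"
    and V_nonneg: "\<And>x z. 0 \<le> Vf x z" and \<alpha>_lin: "\<And>s. s \<ge> 0 \<Longrightarrow> \<alpha> s = a * s"
    and aU: "0 < aU" "aU \<le> a" and "0 \<le> \<mu>"
    and \<theta>: "mono_on {0..} \<theta>" "\<theta> 0 = 0"
    and \<alpha>s_lin: "\<And>i s. s \<ge> 0 \<Longrightarrow> \<alpha>s i s = ai i * s"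
    and d: "\<And>i. 0 \<le> d i" and b: "\<And>i. b i \<le> 1"
    and node: "\<And>i s g. 0 \<le> s \<Longrightarrow> g \<le> \<sigma> i * (ai i * s) + \<epsilon> i \<Longrightarrow>
        g + d i * (- (ai i * s) + c i * g) \<le> (1 + \<zeta>) * \<epsilon>s i - aU * d i * s"
    and \<epsilon>s: "(1 + \<zeta>) * (\<Sum>i\<in>UNIV. \<epsilon>s i) \<le> aU * \<mu>"
    and w: "L_signal (Uset \<times> Vset) w"
    and sol: "hybrid_solution H_Q (H_F fp fo h Dh \<psi> node \<alpha>s c \<gamma>) (H_C node \<alpha>s \<sigma> \<epsilon> \<gamma>)
            (H_D node \<alpha>s \<sigma> \<epsilon> \<gamma>) (H_G node \<alpha>s \<sigma> \<epsilon> \<gamma> b) w E q"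
    and tj: "(t, j) \<in> E"
  shows "hybrid_lyapunov Vf d (q (t, j))
    \<le> exp (- aU * t) * hybrid_lyapunov Vf d (q (0, 0)) + \<mu> + \<theta> (ess_sup_norm (\<lambda>s. snd (w s)) 0 t) / aU"
proof -
  define \<Theta> where "\<Theta> = \<theta> (ess_sup_norm (\<lambda>s. snd (w s)) 0 t)"
  have "0 \<le> t"
    using sol tj unfolding hybrid_solution_def hybrid_arc_def hybrid_time_domain_def by auto
  note ess = L_signal_ess_sup_norm_snd[OF w this]
  have "0 \<le> \<Theta>" using mono_onD[OF \<theta>(1), of 0] ess(2) \<theta>(2) by (simp add: \<Theta>_def)
  have "hybrid_lyapunov Vf d (q (t, j)) \<le>
      exp (- aU * t) * (hybrid_lyapunov Vf d (q (0, 0)) - (aU * \<mu> + \<Theta>) / aU) + (aU * \<mu> + \<Theta>) / aU"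
  proof (rule hybrid_solution_decay[OF sol hybrid_lyapunov_has_derivative[OF V_deriv]
        hybrid_lyapunov_lipschitz[OF V_deriv V_C1] _ _ aU(1) tj])
    show "AE s in lebesgue. s \<in> {0..t} \<longrightarrow> (\<forall>Q\<in>H_C node \<alpha>s \<sigma> \<epsilon> \<gamma>. hybrid_lyapunov_deriv DV d Q
        (H_F fp fo h Dh \<psi> node \<alpha>s c \<gamma> Q (w s)) \<le> aU * \<mu> + \<Theta> - aU * hybrid_lyapunov Vf d Q)"
      using ess(1)
    proof (eventually_elim, intro impI ballI)
      fix s and Q :: "('x, 'z, 'y, 'n) hstate"
      assume "s \<in> {0..t} \<longrightarrow> w s \<in> Uset \<times> Vset \<and> norm (snd (w s)) \<le> ess_sup_norm (\<lambda>s. snd (w s)) 0 t"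
        and "s \<in> {0..t}" and Q: "Q \<in> H_C node \<alpha>s \<sigma> \<epsilon> \<gamma>"
      then obtain u v where uv: "w s = (u, v)" "u \<in> Uset" "v \<in> Vset"
        and v: "norm v \<le> ess_sup_norm (\<lambda>s. snd (w s)) 0 t" by auto
      have "hybrid_lyapunov_deriv DV d Q (H_F fp fo h Dh \<psi> node \<alpha>s c \<gamma> Q (u, v))
          \<le> aU * \<mu> + \<theta> (norm v) - aU * hybrid_lyapunov Vf d Q"
        using V_dissip V_nonneg \<alpha>_lin aU(2) \<alpha>s_lin node \<epsilon>s Q uv(2,3) by (rule H_flow_lyapunov_bound)
      moreover have "\<theta> (norm v) \<le> \<Theta>" unfolding \<Theta>_def using mono_onD[OF \<theta>(1)] v by simp
      ultimately show "hybrid_lyapunov_deriv DV d Q (H_F fp fo h Dh \<psi> node \<alpha>s c \<gamma> Q (w s))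
          \<le> aU * \<mu> + \<Theta> - aU * hybrid_lyapunov Vf d Q"
        using uv(1) by simp
    qed
    show "hybrid_lyapunov Vf d Q' \<le> hybrid_lyapunov Vf d Q"
      if "Q \<in> H_D node \<alpha>s \<sigma> \<epsilon> \<gamma>" "Q' \<in> H_G node \<alpha>s \<sigma> \<epsilon> \<gamma> b Q" for Q Q'
      using hybrid_lyapunov_jump[OF d b that] .
  qed
  also have "\<dots> \<le> exp (- aU * t) * hybrid_lyapunov Vf d (q (0, 0)) + \<mu> + \<Theta> / aU"
    using \<open>0 \<le> \<mu>\<close> \<open>0 \<le> \<Theta>\<close> aU(1) by (simp add: right_diff_distrib add_divide_distrib)
  finally show ?thesis unfolding \<Theta>_def .
qed

theorem theorem2:
  fixes fp :: "'x::euclidean_space \<Rightarrow> 'u::euclidean_space \<Rightarrow> 'v::euclidean_space \<Rightarrow> 'x"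
    and h :: "'x \<Rightarrow> 'y::euclidean_space"
    and Dh :: "'x \<Rightarrow> 'x \<Rightarrow>\<^sub>L 'y"
    and fo :: "'z::euclidean_space \<Rightarrow> 'u \<Rightarrow> 'y \<Rightarrow> 'y \<Rightarrow> 'z"
    and \<psi> :: "'z \<Rightarrow> 'x" and \<psi>R :: "'x \<Rightarrow> 'z"
    and node :: "'y \<Rightarrow> 'n::finite"
    and Uset :: "'u set" and Vset :: "'v set"
    and Vf :: "'x \<Rightarrow> 'z \<Rightarrow> real" and DV :: "'x \<Rightarrow> 'z \<Rightarrow> ('x \<times> 'z) \<Rightarrow>\<^sub>L real"
    and \<alpha>lo \<alpha>up \<alpha> \<theta> :: "real \<Rightarrow> real" and \<gamma> :: "'n \<Rightarrow> real \<Rightarrow> real"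
    and a aU \<mu> :: real
    and cstar \<sigma>star astar \<epsilon>star :: "'n \<Rightarrow> real"
    and c \<sigma> ai b \<epsilon> :: "'n \<Rightarrow> real" and \<alpha>s :: "'n \<Rightarrow> real \<Rightarrow> real"
    and d :: "'n \<Rightarrow> real" and vs :: real
  assumes fp_lip: "local_lipschitz (Uset \<times> Vset) UNIV (\<lambda>(u, v) x. fp x u v)"
    and fp_cont: "continuous_on (UNIV \<times> Uset \<times> Vset) (\<lambda>(x, u, v). fp x u v)"
    and h_deriv: "\<And>x. (h has_derivative blinfun_apply (Dh x)) (at x)"
    and h_C1: "continuous_on UNIV Dh"
    and fo_cont: "continuous_on UNIV (\<lambda>(z, u, y, yh). fo z u y yh)"
    and dim_z: "DIM('x) \<le> DIM('z)"
    and \<psi>R: "\<And>x. \<psi> (\<psi>R x) = x"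
    and nodes: "node ` Basis = UNIV"
    and K_lo: "Kinf \<alpha>lo" and K_up: "Kinf \<alpha>up" and K_\<alpha>: "Kinf \<alpha>"
    and K_\<gamma>: "\<And>i. Kinf (\<gamma> i)" and K_\<theta>: "Kinf \<theta>"
    and V_deriv: "\<And>x z. ((\<lambda>p. Vf (fst p) (snd p)) has_derivative blinfun_apply (DV x z)) (at (x, z))"
    and V_C1: "continuous_on UNIV (\<lambda>(x, z). DV x z)"
    and V_nonneg: "\<And>x z. 0 \<le> Vf x z"
    and V_sandwich: "\<And>x z. \<alpha>lo (norm (x - \<psi> z)) \<le> Vf x z \<and> Vf x z \<le> \<alpha>up (norm (\<psi>R x - z))"
    and V_dissip: "\<And>x z u v e yh. u \<in> Uset \<Longrightarrow> v \<in> Vset \<Longrightarrow>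
        blinfun_apply (DV x z) (fp x u v, fo z u (h x + e) yh)
          \<le> - \<alpha> (Vf x z) + (\<Sum>i\<in>UNIV. \<gamma> i (norm (node_part node i e))) + \<theta> (norm v)"
    and a_pos: "a > 0" and \<alpha>_lin: "\<And>s. s \<ge> 0 \<Longrightarrow> \<alpha> s = a * s"
    and aU: "0 < aU" "aU \<le> a" and \<mu>: "\<mu> > 0"
    and cstar: "\<And>i. 0 \<le> cstar i" and \<sigma>star: "\<And>i. 0 < \<sigma>star i"
    and \<sigma>c: "\<And>i. \<sigma>star i * cstar i < 1"
    and c_rng: "\<And>i. 0 \<le> c i \<and> c i \<le> cstar i"
    and \<sigma>_rng: "\<And>i. 0 \<le> \<sigma> i \<and> \<sigma> i \<le> \<sigma>star i"
    and astar_pos: "\<And>i. 0 < astar i"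
    and astar: "\<And>i. astar i > aU / (1 - \<sigma>star i * cstar i)"
    and ai: "\<And>i. ai i \<ge> astar i"
    and \<alpha>s_lin: "\<And>i s. s \<ge> 0 \<Longrightarrow> \<alpha>s i s = ai i * s"
    and b_rng: "\<And>i. 0 \<le> b i \<and> b i \<le> 1"
    and \<epsilon>_rng: "\<And>i. 0 < \<epsilon> i \<and> \<epsilon> i \<le> \<epsilon>star i"
    and d_def: "d \<equiv> (\<lambda>i. \<sigma>star i / (1 - \<sigma>star i * cstar i - aU / astar i))"
    and vs_def: "vs \<equiv> Max (range (\<lambda>i. d i * cstar i))"
    and \<epsilon>star_sum: "(\<Sum>i\<in>UNIV. \<epsilon>star i) \<le> aU * \<mu> / (1 + vs)"
  shows "(\<forall>i. d i > \<sigma>star i / (1 - \<sigma>star i * cstar i))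
    \<and> (\<forall>w E (q :: real \<times> nat \<Rightarrow> ('x, 'z, 'y, 'n) hstate).
         L_signal (Uset \<times> Vset) w \<longrightarrow>
         hybrid_solution H_Q (H_F fp fo h Dh \<psi> node \<alpha>s c \<gamma>) (H_C node \<alpha>s \<sigma> \<epsilon> \<gamma>)
            (H_D node \<alpha>s \<sigma> \<epsilon> \<gamma>) (H_G node \<alpha>s \<sigma> \<epsilon> \<gamma> b) w E q \<longrightarrow>
         (\<forall>(t, j)\<in>E.
            Vf (fst (q (t, j))) (fst (snd (q (t, j))))
              + (\<Sum>i\<in>UNIV. d i * (snd (snd (snd (q (t, j))))) $ i)
            \<le> exp (- aU * t) * (Vf (fst (q (0, 0))) (fst (snd (q (0, 0))))
                   + (\<Sum>i\<in>UNIV. d i * (snd (snd (snd (q (0, 0))))) $ i))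
              + \<mu> + \<theta> (ess_sup_norm (\<lambda>s. snd (w s)) 0 t) / aU))"
proof -
  have gain: "0 < 1 - \<sigma>star i * cstar i - aU / astar i" "\<sigma>star i / (1 - \<sigma>star i * cstar i) < d i" for i
    using node_gain_bounds[OF \<sigma>star cstar \<sigma>c aU(1) astar] unfolding d_def by auto
  have d_pos: "0 < d i" for i using gain(1) \<sigma>star by (simp add: d_def)
  have vs: "d i * cstar i \<le> vs" for i unfolding vs_def by (rule Max_ge) auto
  then have "0 \<le> vs" using d_pos cstar by (meson order_trans zero_le_mult_iff less_imp_le)
  then have \<epsilon>s: "(1 + vs) * (\<Sum>i\<in>UNIV. \<epsilon>star i) \<le> aU * \<mu>"
    using \<epsilon>star_sum by (simp add: le_divide_eq mult.commute)
  have node: "g + d i * (- (ai i * s) + c i * g) \<le> (1 + vs) * \<epsilon>star i - aU * d i * s"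
    if "0 \<le> s" "g \<le> \<sigma> i * (ai i * s) + \<epsilon> i" for i s g
    using c_rng[of i] \<sigma>_rng[of i] ai[of i] \<epsilon>_rng[of i] vs[of i] that unfolding d_def
    by (intro node_dissipation[where \<sigma> = "\<sigma> i" and \<epsilon> = "\<epsilon> i", OF \<sigma>star cstar \<sigma>c aU(1) astar]) auto
  have \<theta>: "mono_on {0..} \<theta>" "\<theta> 0 = 0"
    using K_\<theta> by (auto simp: Kinf_def intro: strict_mono_on_imp_mono_on)
  show ?thesis
  proof (intro conjI allI impI ballI; (clarify)?)
    show "\<sigma>star i / (1 - \<sigma>star i * cstar i) < d i" for i by (rule gain(2))
    fix w E t j and q :: "real \<times> nat \<Rightarrow> ('x, 'z, 'y, 'n) hstate"
    assume "L_signal (Uset \<times> Vset) w" "(t, j) \<in> E"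
      "hybrid_solution H_Q (H_F fp fo h Dh \<psi> node \<alpha>s c \<gamma>) (H_C node \<alpha>s \<sigma> \<epsilon> \<gamma>)
         (H_D node \<alpha>s \<sigma> \<epsilon> \<gamma>) (H_G node \<alpha>s \<sigma> \<epsilon> \<gamma> b) w E q"
    from H_solution_lyapunov_bound[OF V_deriv V_C1 V_dissip V_nonneg \<alpha>_lin aU less_imp_le[OF \<mu>] \<theta> \<alpha>s_lin
        less_imp_le[OF d_pos] _ node \<epsilon>s this(1,3,2)] b_rng
    show "Vf (fst (q (t, j))) (fst (snd (q (t, j)))) + (\<Sum>i\<in>UNIV. d i * snd (snd (snd (q (t, j)))) $ i)
      \<le> exp (- aU * t) * (Vf (fst (q (0, 0))) (fst (snd (q (0, 0))))
          + (\<Sum>i\<in>UNIV. d i * snd (snd (snd (q (0, 0)))) $ i))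
        + \<mu> + \<theta> (ess_sup_norm (\<lambda>s. snd (w s)) 0 t) / aU"
      by (simp add: hybrid_lyapunov_def)
  qed
qed

end
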